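(* Let $\mathcal{A}$ be a $\mathbb{Z}_2$-graded Hopf algebra with homogeneous basis $\{e_\alpha\}$, and let $D(\mathcal{A})$, $H(\mathcal{A})$, $H(\mathcal{A}^* )$ be as in the context. Let $a,a',b,b'\in\mathbb{Z}_{\ge0}$ satisfy $(-1)^{a+a'}=-1$ and $(-1)^{b+b'}=1$. Then the map $\eta:D(\mathcal{A})\to H(\mathcal{A})\otimes H(\mathcal{A}^* )$ given on generators by $$\eta(e_\alpha\otimes 1)=\sum_{\beta,\gamma}(-1)^{a|\beta|+b|\gamma|}\mu^{\beta\gamma}_\alpha\, e_\beta\otimes\tilde e_\gamma,\qquad \eta(1\otimes e^\alpha)=\sum_{\beta,\gamma}(-1)^{a'|\beta|+b'|\gamma|}m^\alpha_{\gamma\beta}\, e^\beta\otimes\tilde e^\gamma$$ (and $\eta(e_\alpha\otimes e^\beta)=\eta(e_\alpha\otimes 1)\eta(1\otimes e^\beta)$) is an algebra homomorphism.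
   Context: Graded tensor products: $(a_1\otimes b_1)(a_2\otimes b_2)=(-1)^{|b_1||a_2|}a_1a_2\otimes b_1b_2$. $\mathcal{A}$ is a $\mathbb{Z}_2$-graded Hopf algebra over $\mathbb{C}$ with homogeneous basis $e_\alpha$ of degree $|\alpha|$, $e_\alpha e_\beta=\sum_\gamma m^\gamma_{\alpha\beta}e_\gamma$, $\Delta(e_\alpha)=\sum\mu^{\beta\gamma}_\alpha e_\beta\otimes e_\gamma$, antipode $\gamma(e_\alpha)=\sum\gamma_\alpha^\beta e_\beta$ with inverse coefficients $(\gamma^{-1})^\beta_\alpha$; dual Hopf algebra $\mathcal{A}^*$ with dual basis $e^\alpha$. The Drinfeld double $D(\mathcal{A})$ is spanned by $e_\alpha\otimes e^\beta$ with relations $(e_\alpha\otimes1)(1\otimes e^\beta)=e_\alpha\otimes e^\beta$, $(e_\alpha\otimes1)(e_\beta\otimes1)=\sum_\gamma m^\gamma_{\alpha\beta}e_\gamma\otimes1$, $(1\otimes e^\alpha)(1\otimes e^\beta)=\sum_\gamma(-1)^{|\alpha||\beta|}\mu^{\alpha\beta}_\gamma\,1\otimes e^\gamma$, and $(1\otimes e^\alpha)(e_\beta\otimes1)=\sum(-1)^{|\mu|(|\sigma|+|\delta|)}m^\mu_{\nu\gamma}m^\alpha_{\mu\delta}\mu^{\epsilon\rho}_\beta\mu^{\sigma\nu}_\rho(\gamma^{-1})^\delta_\epsilon\, e_\sigma\otimes e^\gamma$ (sum over $\mu,\nu,\gamma,\delta,\epsilon,\rho,\sigma$). The Heisenberg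 double $H(\mathcal{A})$ is spanned by $e^\alpha\otimes e_\beta$ with product $(e^\alpha\otimes e_\beta)(e^\gamma\otimes e_\delta)=\sum(-1)^{|\beta||\gamma|+|\pi||\epsilon|+|\pi||\alpha|+|\epsilon|}m^\gamma_{\pi\epsilon}m^\tau_{\rho\delta}\mu^{\epsilon\rho}_\beta\mu^{\alpha\pi}_\sigma e^\sigma\otimes e_\tau$; write $e_\alpha=1\otimes e_\alpha$, $e^\alpha=e^\alpha\otimes1$. The Heisenberg double $H(\mathcal{A}^* )$ is spanned by $\tilde e_\alpha\otimes\tilde e^\beta$ with product $(\tilde e_\alpha\otimes\tilde e^\beta)(\tilde e_\gamma\otimes\tilde e^\delta)=\sum(-1)^{|\rho||\pi|+|\rho||\epsilon|+|\pi||\delta|}\mu^{\rho\epsilon}_\gamma\mu^{\pi\delta}_\tau m^\beta_{\epsilon\pi}m^\sigma_{\alpha\rho}\tilde e_\sigma\otimes\tilde e^\tau$; write $\tilde e_\alpha=\tilde e_\alpha\otimes1$, $\tilde e^\alpha=1\otimes\tilde e^\alpha$, degrees $|\alpha|$. $H(\mathcal{A})\otimes H(\mathcal{A}^* )$ carries the graded tensor product algebra structure. *)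

theory Defs
  imports Main "HOL-Analysis.Analysis"
begin

text \<open>
A finite-dimensional Z2-graded Hopf algebra over the complex numbers
is given by structure constants with respect to a homogeneous basis indexed by a
finite type 'i.  The Z2-degree of basis element e_i is the parity of deg i.
  m g a b      = m^g_{ab}           (e_a e_b = sum_g m^g_{ab} e_g)
  u a          = coefficient of e_a in the unit 1
  mu a b c     = mu^{bc}_a          (Delta e_a = sum mu^{bc}_a e_b (x) e_c)
  eps a        = counit of e_a
  S a b        = gamma_a^b          (antipode: gamma e_a = sum gamma_a^b e_b)
  Sinv a b     = (gamma^{-1})_a^b
\<close>

definition sgn :: "nat \<Rightarrow> complex" where
  "sgn k = (-1) ^ k"

definition kron :: "'a \<Rightarrow> 'a \<Rightarrow> complex" where
  "kron x y = (if x = y then 1 else 0)"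

definition graded_hopf ::
  "('i::finite \<Rightarrow> nat) \<Rightarrow> ('i \<Rightarrow> 'i \<Rightarrow> 'i \<Rightarrow> complex) \<Rightarrow> ('i \<Rightarrow> complex)
   \<Rightarrow> ('i \<Rightarrow> 'i \<Rightarrow> 'i \<Rightarrow> complex) \<Rightarrow> ('i \<Rightarrow> complex) \<Rightarrow> ('i \<Rightarrow> 'i \<Rightarrow> complex) \<Rightarrow> bool" where
  "graded_hopf deg m u mu eps S \<longleftrightarrow>
    \<comment> \<open>homogeneity: all structure maps are even\<close>
    (\<forall>g a b. m g a b \<noteq> 0 \<longrightarrow> even (deg g + deg a + deg b)) \<and>
    (\<forall>a b c. mu a b c \<noteq> 0 \<longrightarrow> even (deg a + deg b + deg c)) \<and>
    (\<forall>a. u a \<noteq> 0 \<longrightarrow> even (deg a)) \<and>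
    (\<forall>a. eps a \<noteq> 0 \<longrightarrow> even (deg a)) \<and>
    (\<forall>a b. S a b \<noteq> 0 \<longrightarrow> even (deg a + deg b)) \<and>
    \<comment> \<open>associative unital algebra\<close>
    (\<forall>a b c d. (\<Sum>k\<in>UNIV. m k a b * m d k c) = (\<Sum>k\<in>UNIV. m k b c * m d a k)) \<and>
    (\<forall>a d. (\<Sum>k\<in>UNIV. u k * m d k a) = kron d a) \<and>
    (\<forall>a d. (\<Sum>k\<in>UNIV. u k * m d a k) = kron d a) \<and>
    \<comment> \<open>coassociative counital coalgebra\<close>
    (\<forall>a r s c. (\<Sum>k\<in>UNIV. mu a k c * mu k r s) = (\<Sum>k\<in>UNIV. mu a r k * mu k s c)) \<and>
    (\<forall>a c. (\<Sum>b\<in>UNIV. eps b * mu a b c) = kron a c) \<and>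
    (\<forall>a b. (\<Sum>c\<in>UNIV. eps c * mu a b c) = kron a b) \<and>
    \<comment> \<open>Delta and eps are algebra maps (A (x) A with the graded tensor product)\<close>
    (\<forall>a b r s. (\<Sum>g\<in>UNIV. m g a b * mu g r s) =
       (\<Sum>r1\<in>UNIV. \<Sum>s1\<in>UNIV. \<Sum>r2\<in>UNIV. \<Sum>s2\<in>UNIV.
          sgn (deg s1 * deg r2) * mu a r1 s1 * mu b r2 s2 * m r r1 r2 * m s s1 s2)) \<and>
    (\<forall>r s. (\<Sum>g\<in>UNIV. u g * mu g r s) = u r * u s) \<and>
    (\<forall>a b. (\<Sum>g\<in>UNIV. m g a b * eps g) = eps a * eps b) \<and>
    (\<Sum>g\<in>UNIV. u g * eps g) = 1 \<and>
    \<comment> \<open>antipode\<close>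
    (\<forall>a d. (\<Sum>b\<in>UNIV. \<Sum>c\<in>UNIV. \<Sum>k\<in>UNIV. mu a b c * S b k * m d k c) = eps a * u d) \<and>
    (\<forall>a d. (\<Sum>b\<in>UNIV. \<Sum>c\<in>UNIV. \<Sum>k\<in>UNIV. mu a b c * S c k * m d b k) = eps a * u d)"

definition inverse_coeffs :: "('i::finite \<Rightarrow> 'i \<Rightarrow> complex) \<Rightarrow> ('i \<Rightarrow> 'i \<Rightarrow> complex) \<Rightarrow> bool" where
  "inverse_coeffs S Sinv \<longleftrightarrow>
    (\<forall>a b. (\<Sum>k\<in>UNIV. S a k * Sinv k b) = kron a b) \<and>
    (\<forall>a b. (\<Sum>k\<in>UNIV. Sinv a k * S k b) = kron a b)"

text \<open>An algebra given by structure constants c on a finite basis 'b: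
 elements are coefficient functions, x y = sum_{i,j} x_i y_j c i j.\<close>

definition sc_mult :: "('b::finite \<Rightarrow> 'b \<Rightarrow> 'b \<Rightarrow> complex) \<Rightarrow> ('b \<Rightarrow> complex) \<Rightarrow> ('b \<Rightarrow> complex) \<Rightarrow> ('b \<Rightarrow> complex)" where
  "sc_mult c x y = (\<lambda>k. \<Sum>i\<in>UNIV. \<Sum>j\<in>UNIV. x i * y j * c i j k)"

definition basis_vec :: "'b \<Rightarrow> ('b \<Rightarrow> complex)" where
  "basis_vec i = (\<lambda>k. kron i k)"

text \<open>Drinfeld double D(A): basis e_a (x) e^b indexed by (a,b).
 cross term: (1 (x) e^b)(e_g (x) 1) = sum_{s,t} D_cross b g s t  e_s (x) e^t\<close>

definition D_cross where
  "D_cross deg m mu Sinv be ga s t =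
     (\<Sum>mm\<in>UNIV. \<Sum>nu\<in>UNIV. \<Sum>de\<in>UNIV. \<Sum>ep\<in>UNIV. \<Sum>rho\<in>UNIV.
        sgn (deg mm * (deg s + deg de)) * m mm nu t * m be mm de * mu ga ep rho * mu rho s nu * Sinv ep de)"

text \<open>(e_a (x) e^b)(e_g (x) e^d) = (e_a (x) 1)(1 (x) e^b)(e_g (x) 1)(1 (x) e^d),
 using (e_a (x) 1)(e_s (x) e^t) = e_a e_s (x) e^t and (e_k (x) e^t)(1 (x) e^d) = e_k (x) e^t e^d.\<close>

definition D_const where
  "D_const deg m mu Sinv = (\<lambda>(al, be) (ga, de) (k, l).
     \<Sum>s\<in>UNIV. \<Sum>t\<in>UNIV. D_cross deg m mu Sinv be ga s t * m k al s * sgn (deg t * deg de) * mu l t de)"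

definition D_unit :: "('i::finite \<Rightarrow> complex) \<Rightarrow> ('i \<Rightarrow> complex) \<Rightarrow> ('i \<times> 'i \<Rightarrow> complex)" where
  "D_unit u eps = (\<lambda>(a, b). u a * eps b)"

text \<open>Heisenberg double H(A): basis e^a (x) e_b indexed by (a,b).\<close>

definition HA_const where
  "HA_const deg m mu = (\<lambda>(al, be) (ga, de) (s, t).
     \<Sum>pi\<in>UNIV. \<Sum>ep\<in>UNIV. \<Sum>rho\<in>UNIV.
       sgn (deg be * deg ga + deg pi * deg ep + deg pi * deg al + deg ep) *
       m ga pi ep * m t rho de * mu be ep rho * mu s al pi)"

text \<open>Heisenberg double H(A*): basis ~e_a (x) ~e^b indexed by (a,b).\<close>

definition HAs_const where
  "HAs_const deg m mu = (\<lambda>(al, be) (ga, de) (s, t).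
     \<Sum>pi\<in>UNIV. \<Sum>ep\<in>UNIV. \<Sum>rho\<in>UNIV.
       sgn (deg rho * deg pi + deg rho * deg ep + deg pi * deg de) *
       mu ga rho ep * mu t pi de * m be ep pi * m s al rho)"

text \<open>Graded tensor product H(A) (x) H(A*); the degree of a basis element (a,b) of
 either Heisenberg double is deg a + deg b.\<close>

definition T_const where
  "T_const deg m mu = (\<lambda>(p1, q1) (p2, q2) (p, q).
     sgn ((deg (fst q1) + deg (snd q1)) * (deg (fst p2) + deg (snd p2))) *
     HA_const deg m mu p1 p2 p * HAs_const deg m mu q1 q2 q)"

definition T_unit :: "('i::finite \<Rightarrow> complex) \<Rightarrow> ('i \<Rightarrow> complex) \<Rightarrow> (('i \<times> 'i) \<times> ('i \<times> 'i) \<Rightarrow> complex)" where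
  "T_unit u eps = (\<lambda>((s, t), (k, l)). (eps s * u t) * (u k * eps l))"

text \<open>eta(e_a (x) 1) = sum (-1)^{a|b|+b|g|} mu^{bg}_a e_b (x) ~e_g, where
 e_b = 1 (x) e_b in H(A) (1 of A* is eps), ~e_g = ~e_g (x) 1 in H(A*).\<close>

definition eta_L where
  "eta_L deg mu eps a b al = (\<lambda>((s, t), (k, l)).
     \<Sum>be\<in>UNIV. \<Sum>ga\<in>UNIV. sgn (a * deg be + b * deg ga) * mu al be ga *
        ((eps s * kron be t) * (kron ga k * eps l)))"

text \<open>eta(1 (x) e^a) = sum (-1)^{a'|b|+b'|g|} m^a_{gb} e^b (x) ~e^g, where
 e^b = e^b (x) 1 in H(A) (1 of A is u), ~e^g = 1 (x) ~e^g in H(A*).\<close>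

definition eta_R where
  "eta_R deg m u a' b' al = (\<lambda>((s, t), (k, l)).
     \<Sum>be\<in>UNIV. \<Sum>ga\<in>UNIV. sgn (a' * deg be + b' * deg ga) * m al ga be *
        ((kron be s * u t) * (u k * kron ga l)))"

definition eta where
  "eta deg m u mu eps a a' b b' x =
     (\<lambda>z. \<Sum>p\<in>UNIV. x p *
        sc_mult (T_const deg m mu) (eta_L deg mu eps a b (fst p)) (eta_R deg m u a' b' (snd p)) z)"

definition alg_hom where
  "alg_hom c1 one1 c2 one2 f \<longleftrightarrow>
     (\<forall>x y. f (sc_mult c1 x y) = sc_mult c2 (f x) (f y)) \<and> f one1 = one2"

end

theory Submission
  imports Defs
begin

text \<open>
  H(A) and H(A*) are twisted tensor products (smash products) A* \<otimes> A and A \<otimes> A*, and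
  H(A) \<otimes> H(A*) is their graded tensor product; all three are associative because the twisting
  maps are compatible with the multiplications, which is a consequence of the bialgebra axioms.
  Every basis element e_\<alpha> \<otimes> e^\<beta> of D(A) is the product (e_\<alpha> \<otimes> 1)(1 \<otimes> e^\<beta>), and \<eta> is defined
  accordingly, so by associativity \<eta> is multiplicative as soon as the images of the generators
  satisfy the defining relations of D(A): the images of the e_\<alpha> \<otimes> 1 multiply like A (by the
  compatibility of \<mu> with m), those of the 1 \<otimes> e^\<beta> multiply like A*, and the exchange relation
  for (1 \<otimes> e^\<beta>)(e_\<gamma> \<otimes> 1) follows from (co)associativity together with the identity
  \<Sum> (-1)^{|e||f|} \<mu>^{ef}_g S^{-1}(e_e) e_f = \<epsilon>(e_g) 1, derived from the anti-multiplicativity of S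
  (two convolution inverses of m must coincide). The parity conditions on a, a', b, b' are what
  make the signs in the exchange relation agree.
\<close>

lemma sum_UNIV_prod:
  "(\<Sum>k\<in>(UNIV::('a::finite \<times> 'b::finite) set). f k) = (\<Sum>a\<in>UNIV. \<Sum>b\<in>UNIV. f (a, b))"
  by (metis UNIV_Times_UNIV sum.cartesian_product')

lemma sum_UNIV_reindex_cong:
  fixes j :: "'a::finite \<Rightarrow> 'b::finite"
  assumes "\<And>x. i (j x) = x" and "\<And>y. j (i y) = y" and "\<And>x. f x = g (j x)"
  shows "(\<Sum>x\<in>UNIV. f x) = (\<Sum>y\<in>UNIV. g y)"
  using assms by (intro sum.reindex_bij_witness[of _ i j]) auto

lemmas sum_product_UNIV = sum.cartesian_product UNIV_Times_UNIV

lemma kron_sym: "kron x y = kron y x"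
  by (simp add: kron_def)

lemma kron_mult_left: "kron x y * z = (if x = y then z else 0)"
  and kron_mult_right: "z * kron x y = (if x = y then z else 0)"
  by (simp_all add: kron_def)

lemma sum_if_eq_conj:
  fixes f :: "'a::finite \<Rightarrow> complex"
  shows "(\<Sum>x\<in>UNIV. if x = a \<and> Q x then f x else 0) = (if Q a then f a else 0)"
    and "(\<Sum>x\<in>UNIV. if a = x \<and> Q x then f x else 0) = (if Q a then f a else 0)"
    and "(\<Sum>x\<in>UNIV. if Q x \<and> x = a then f x else 0) = (if Q a then f a else 0)"
    and "(\<Sum>x\<in>UNIV. if Q x \<and> a = x then f x else 0) = (if Q a then f a else 0)"
  by (simp_all only: conj_commute[of "Q _"]) (simp_all add: if_if_eq_conj[symmetric] sum.delta)

lemma if_0_mult: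
  "(if P then a else 0) * b = (if P then a * b else (0::complex))"
  "b * (if P then a else 0) = (if P then b * a else (0::complex))"
  by simp_all

lemma sum_if_0: "(\<Sum>x\<in>A. if P then f x else 0) = (if P then sum f A else (0::complex))"
  by simp

lemmas kron_simps = kron_mult_left kron_mult_right if_0_mult if_if_eq_conj sum_if_0 sum_if_eq_conj
  sum.delta sum.delta' UNIV_I if_True

lemma sgn_if: "sgn x = (if even x then 1 else -1)"
  by (simp add: sgn_def)

lemmas parity_simps = even_add even_mult_iff even_zero odd_one

lemmas nonzero_factors = mult_eq_0_iff de_Morgan_disj conj_imp_eq_imp_imp

lemma sgn_add: "sgn (x + y) = sgn x * sgn y"
  by (simp add: sgn_def power_add)

lemma sgn_eq_iff: "sgn x = sgn y \<longleftrightarrow> even x = even y"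
  by (simp add: sgn_def minus_one_power_iff)

lemma sgn_mult_sgn: "sgn x * (sgn y * z) = sgn (x + y) * z" "sgn x * sgn y = sgn (x + y)"
  by (simp_all add: sgn_add)

text \<open>Sums are rearranged by flattening them into a single sum over tuples and reindexing
  (sum_UNIV_reindex_cong). The summands then agree up to sign: all signs are moved to the front
  (sgn_0_cancel, sign_normalize) and their parities compared with sgn_mult_cong, using that a
  structure constant vanishes unless the degrees of its indices add up to an even number.\<close>

lemma sgn_0_cancel: "sgn 0 * a = sgn 0 * b \<Longrightarrow> a = b"
  by (simp add: sgn_def)

lemma sgn_mult_cong: "a = b \<Longrightarrow> (a \<noteq> 0 \<Longrightarrow> even x = even y) \<Longrightarrow> sgn x * a = sgn y * b"
  by (cases "a = 0") (auto simp: sgn_eq_iff)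

section \<open>Algebras given by structure constants\<close>

definition sc_associative :: "('b::finite \<Rightarrow> 'b \<Rightarrow> 'b \<Rightarrow> complex) \<Rightarrow> bool" where
  "sc_associative c \<longleftrightarrow>
     (\<forall>i j l z. (\<Sum>k\<in>UNIV. c i j k * c k l z) = (\<Sum>k\<in>UNIV. c j l k * c i k z))"

definition sc_unit :: "('b::finite \<Rightarrow> 'b \<Rightarrow> 'b \<Rightarrow> complex) \<Rightarrow> ('b \<Rightarrow> complex) \<Rightarrow> bool" where
  "sc_unit c e \<longleftrightarrow>
     (\<forall>j l. (\<Sum>k\<in>UNIV. e k * c k j l) = kron j l) \<and> (\<forall>j l. (\<Sum>k\<in>UNIV. e k * c j k l) = kron j l)"

lemma sc_mult_sum_left:
  fixes f :: "'a::finite \<Rightarrow> complex"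
  shows "sc_mult c (\<lambda>z. \<Sum>i\<in>UNIV. f i * g i z) y = (\<lambda>z. \<Sum>i\<in>UNIV. f i * sc_mult c (g i) y z)"
  unfolding sc_mult_def
  by (intro ext, (simp only: sum_distrib_left sum_distrib_right)?, simp only: sum_product_UNIV,
      rule sum_UNIV_reindex_cong[of "\<lambda>(i, a, b). (a, b, i)" "\<lambda>(a, b, i). (i, a, b)"]) (auto simp: mult_ac)

lemma sc_mult_sum_right:
  fixes f :: "'a::finite \<Rightarrow> complex"
  shows "sc_mult c x (\<lambda>z. \<Sum>i\<in>UNIV. f i * g i z) = (\<lambda>z. \<Sum>i\<in>UNIV. f i * sc_mult c x (g i) z)"
  unfolding sc_mult_def
  by (intro ext, (simp only: sum_distrib_left sum_distrib_right)?, simp only: sum_product_UNIV,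
      rule sum_UNIV_reindex_cong[of "\<lambda>(i, a, b). (a, b, i)" "\<lambda>(a, b, i). (i, a, b)"]) (auto simp: mult_ac)

lemma sc_mult_sum2_left:
  fixes f :: "'a::finite \<Rightarrow> 'b::finite \<Rightarrow> complex"
  shows "sc_mult c (\<lambda>z. \<Sum>i\<in>UNIV. \<Sum>j\<in>UNIV. f i j * g i j z) y =
     (\<lambda>z. \<Sum>i\<in>UNIV. \<Sum>j\<in>UNIV. f i j * sc_mult c (g i j) y z)"
  unfolding sc_mult_def
  by (intro ext, (simp only: sum_distrib_left sum_distrib_right)?, simp only: sum_product_UNIV,
      rule sum_UNIV_reindex_cong[of "\<lambda>(i, j, a, b). (a, b, i, j)" "\<lambda>(a, b, i, j). (i, j, a, b)"])
    (auto simp: mult_ac)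

lemma sc_mult_sum2_right:
  fixes f :: "'a::finite \<Rightarrow> 'b::finite \<Rightarrow> complex"
  shows "sc_mult c x (\<lambda>z. \<Sum>i\<in>UNIV. \<Sum>j\<in>UNIV. f i j * g i j z) =
     (\<lambda>z. \<Sum>i\<in>UNIV. \<Sum>j\<in>UNIV. f i j * sc_mult c x (g i j) z)"
  unfolding sc_mult_def
  by (intro ext, (simp only: sum_distrib_left sum_distrib_right)?, simp only: sum_product_UNIV,
      rule sum_UNIV_reindex_cong[of "\<lambda>(i, j, a, b). (a, b, i, j)" "\<lambda>(a, b, i, j). (i, j, a, b)"])
    (auto simp: mult_ac)

lemma sc_mult_basis_vec: "sc_mult c (basis_vec i) (basis_vec j) = c i j"
  by (simp add: sc_mult_def basis_vec_def kron_simps)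

lemma sum_sc_mult_basis_vec_right: "(\<Sum>p\<in>UNIV. y p * sc_mult c x (basis_vec p) z) = sc_mult c x y z"
  by (simp add: sc_mult_def basis_vec_def kron_simps sum_distrib_left mult_ac) (rule sum.swap)

lemma sum_sc_mult_basis_vec_left: "(\<Sum>p\<in>UNIV. x p * sc_mult c (basis_vec p) y z) = sc_mult c x y z"
  by (simp add: sc_mult_def basis_vec_def kron_simps sum_distrib_left mult_ac)

lemma sc_mult_unit_left:
  assumes "sc_unit c e"
  shows "sc_mult c e x = x"
proof
  fix z
  have "sc_mult c e x z = (\<Sum>j\<in>UNIV. x j * (\<Sum>i\<in>UNIV. e i * c i j z))"
    unfolding sc_mult_def by (simp add: sum_distrib_left mult_ac) (rule sum.swap)
  then show "sc_mult c e x z = x z"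
    using assms by (simp add: sc_unit_def kron_simps)
qed

lemma sc_mult_unit_right:
  assumes "sc_unit c e"
  shows "sc_mult c x e = x"
proof
  fix z
  have "sc_mult c x e z = (\<Sum>i\<in>UNIV. x i * (\<Sum>j\<in>UNIV. e j * c i j z))"
    unfolding sc_mult_def by (simp add: sum_distrib_left mult_ac)
  then show "sc_mult c x e z = x z"
    using assms by (simp add: sc_unit_def kron_simps)
qed

lemma sc_mult_assoc:
  assumes "sc_associative c"
  shows "sc_mult c (sc_mult c x y) w = sc_mult c x (sc_mult c y w)"
proof
  fix z
  have "sc_mult c (sc_mult c x y) w z =
      (\<Sum>i\<in>UNIV. \<Sum>j\<in>UNIV. \<Sum>l\<in>UNIV. x i * y j * w l * (\<Sum>k\<in>UNIV. c i j k * c k l z))"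
    unfolding sc_mult_def
    by ((simp only: sum_distrib_left sum_distrib_right)?, simp only: sum_product_UNIV,
        rule sum_UNIV_reindex_cong[of "\<lambda>(i, j, l, k). (k, l, i, j)" "\<lambda>(k, l, i, j). (i, j, l, k)"])
      (auto simp: mult_ac)
  also have "\<dots> = (\<Sum>i\<in>UNIV. \<Sum>j\<in>UNIV. \<Sum>l\<in>UNIV. x i * y j * w l * (\<Sum>k\<in>UNIV. c j l k * c i k z))"
    using assms by (simp add: sc_associative_def)
  also have "\<dots> = sc_mult c x (sc_mult c y w) z"
    unfolding sc_mult_def
    by ((simp only: sum_distrib_left sum_distrib_right)?, simp only: sum_product_UNIV,
        rule sum_UNIV_reindex_cong[of "\<lambda>(i, k, j, l). (i, j, l, k)" "\<lambda>(i, j, l, k). (i, k, j, l)"])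
      (auto simp: mult_ac)
  finally show "sc_mult c (sc_mult c x y) w z = sc_mult c x (sc_mult c y w) z" .
qed

section \<open>Twisted tensor products\<close>

text \<open>For algebras B and C with structure constants pb and pc and a linear map
  c : C \<otimes> B \<rightarrow> B \<otimes> C, written c(e_j \<otimes> e_k) = \<Sum> c j k p r e_p \<otimes> e_r, the twisted tensor product
  multiplies by (a1 \<otimes> b1)(a2 \<otimes> b2) = a1 c(b1 \<otimes> a2) b2.\<close>

definition twisted_tensor ::
  "('b::finite \<Rightarrow> 'b \<Rightarrow> 'b \<Rightarrow> complex) \<Rightarrow> ('c::finite \<Rightarrow> 'c \<Rightarrow> 'c \<Rightarrow> complex) \<Rightarrow>
   ('c \<Rightarrow> 'b \<Rightarrow> 'b \<Rightarrow> 'c \<Rightarrow> complex) \<Rightarrow> 'b \<times> 'c \<Rightarrow> 'b \<times> 'c \<Rightarrow> 'b \<times> 'c \<Rightarrow> complex" where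
  "twisted_tensor pb pc c = (\<lambda>(a1, b1) (a2, b2) (s, t).
     \<Sum>p\<in>UNIV. \<Sum>r\<in>UNIV. c b1 a2 p r * pb a1 p s * pc r b2 t)"

text \<open>c respects the multiplications: c(y \<otimes> x x') is obtained by applying c twice and then
  multiplying in B, and c(y y' \<otimes> x) likewise with the multiplication of C.\<close>

definition twisting_map ::
  "('b::finite \<Rightarrow> 'b \<Rightarrow> 'b \<Rightarrow> complex) \<Rightarrow> ('c::finite \<Rightarrow> 'c \<Rightarrow> 'c \<Rightarrow> complex) \<Rightarrow>
   ('c \<Rightarrow> 'b \<Rightarrow> 'b \<Rightarrow> 'c \<Rightarrow> complex) \<Rightarrow> bool" where
  "twisting_map pb pc c \<longleftrightarrow>
     (\<forall>b g g' p r. (\<Sum>k\<in>UNIV. pb g g' k * c b k p r) =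
        (\<Sum>p1\<in>UNIV. \<Sum>r1\<in>UNIV. \<Sum>p2\<in>UNIV. c b g p1 r1 * c r1 g' p2 r * pb p1 p2 p)) \<and>
     (\<forall>b b' g p r. (\<Sum>k\<in>UNIV. pc b b' k * c k g p r) =
        (\<Sum>p1\<in>UNIV. \<Sum>r1\<in>UNIV. \<Sum>r2\<in>UNIV. c b' g p1 r1 * c b p1 p r2 * pc r2 r1 r))"

lemma sc_associative_twisted_tensor:
  fixes pb :: "'b::finite \<Rightarrow> 'b \<Rightarrow> 'b \<Rightarrow> complex" and pc :: "'c::finite \<Rightarrow> 'c \<Rightarrow> 'c \<Rightarrow> complex"
  assumes "sc_associative pb" and "sc_associative pc" and "twisting_map pb pc c"
  shows "sc_associative (twisted_tensor pb pc c)"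
  unfolding sc_associative_def
proof (intro allI)
  fix i j l z :: "'b \<times> 'c"
  note AB = assms(1)[unfolded sc_associative_def, rule_format]
  note AC = assms(2)[unfolded sc_associative_def, rule_format]
  note CB = assms(3)[unfolded twisting_map_def, THEN conjunct1, rule_format]
  note CC = assms(3)[unfolded twisting_map_def, THEN conjunct2, rule_format]
  obtain a1 b1 a2 b2 a3 b3 s t where ijlz: "i = (a1, b1)" "j = (a2, b2)" "l = (a3, b3)" "z = (s, t)"
    by (cases i, cases j, cases l, cases z) blast
  let ?T = "twisted_tensor pb pc c"
  have "(\<Sum>k\<in>UNIV. ?T i j k * ?T k l z) =
     (\<Sum>p\<in>UNIV. \<Sum>r\<in>UNIV. \<Sum>p'\<in>UNIV. \<Sum>r'\<in>UNIV. c b1 a2 p r * (\<Sum>k1\<in>UNIV. pb a1 p k1 * pb k1 p' s) *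
        (\<Sum>k2\<in>UNIV. pc r b2 k2 * c k2 a3 p' r') * pc r' b3 t)"
    unfolding ijlz twisted_tensor_def sum_UNIV_prod prod.case
    by ((simp only: sum_distrib_left sum_distrib_right)?, simp only: sum_product_UNIV,
        rule sum_UNIV_reindex_cong[of
        "\<lambda>(p, r, p', r', k2, k1). (k1, k2, p', r', p, r)" "\<lambda>(k1, k2, p', r', p, r). (p, r, p', r', k2, k1)"])
      (auto simp: mult_ac)
  also have "\<dots> = (\<Sum>p\<in>UNIV. \<Sum>r\<in>UNIV. \<Sum>p'\<in>UNIV. \<Sum>r'\<in>UNIV. c b1 a2 p r * (\<Sum>k\<in>UNIV. pb p p' k * pb a1 k s) *
        (\<Sum>p1\<in>UNIV. \<Sum>r1\<in>UNIV. \<Sum>r2\<in>UNIV. c b2 a3 p1 r1 * c r p1 p' r2 * pc r2 r1 r') * pc r' b3 t)"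
    by (simp only: AB CC)
  also have "\<dots> = (\<Sum>p\<in>UNIV. \<Sum>r\<in>UNIV. \<Sum>p'\<in>UNIV. \<Sum>p1\<in>UNIV. \<Sum>r1\<in>UNIV. \<Sum>r2\<in>UNIV.
      c b1 a2 p r * c b2 a3 p1 r1 * c r p1 p' r2 * (\<Sum>k\<in>UNIV. pb p p' k * pb a1 k s) *
      (\<Sum>k\<in>UNIV. pc r2 r1 k * pc k b3 t))"
    by ((simp only: sum_distrib_left sum_distrib_right)?, simp only: sum_product_UNIV,
        rule sum_UNIV_reindex_cong[of
        "\<lambda>(p, r, p', p1, r1, r2, r', k). (p, r, p', r', p1, r1, r2, k)"
        "\<lambda>(p, r, p', r', p1, r1, r2, k). (p, r, p', p1, r1, r2, r', k)"])
      (auto simp: mult_ac)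
  also have "\<dots> = (\<Sum>p\<in>UNIV. \<Sum>r\<in>UNIV. \<Sum>p'\<in>UNIV. \<Sum>p1\<in>UNIV. \<Sum>r1\<in>UNIV. \<Sum>r2\<in>UNIV.
      c b1 a2 p r * c b2 a3 p1 r1 * c r p1 p' r2 * (\<Sum>k\<in>UNIV. pb p p' k * pb a1 k s) *
      (\<Sum>k\<in>UNIV. pc r1 b3 k * pc r2 k t))"
    by (simp only: AC)
  also have "\<dots> = (\<Sum>p1\<in>UNIV. \<Sum>r1\<in>UNIV. \<Sum>p\<in>UNIV. \<Sum>r\<in>UNIV. c b2 a3 p1 r1 *
       (\<Sum>pa\<in>UNIV. \<Sum>ra\<in>UNIV. \<Sum>pb'\<in>UNIV. c b1 a2 pa ra * c ra p1 pb' r * pb pa pb' p) *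
        pb a1 p s * (\<Sum>k2\<in>UNIV. pc r1 b3 k2 * pc r k2 t))"
    by ((simp only: sum_distrib_left sum_distrib_right)?, simp only: sum_product_UNIV,
        rule sum_UNIV_reindex_cong[of
        "\<lambda>(p1, r1, k, r2, k2, p, r, p'). (p, r, p', p1, r1, r2, k2, k)"
        "\<lambda>(p, r, p', p1, r1, r2, k2, k). (p1, r1, k, r2, k2, p, r, p')"])
      (auto simp: mult_ac)
  also have "\<dots> = (\<Sum>p1\<in>UNIV. \<Sum>r1\<in>UNIV. \<Sum>p\<in>UNIV. \<Sum>r\<in>UNIV. c b2 a3 p1 r1 *
      (\<Sum>k1\<in>UNIV. pb a2 p1 k1 * c b1 k1 p r) * pb a1 p s * (\<Sum>k2\<in>UNIV. pc r1 b3 k2 * pc r k2 t))"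
    by (simp only: CB)
  also have "\<dots> = (\<Sum>k\<in>UNIV. ?T j l k * ?T i k z)"
    unfolding ijlz twisted_tensor_def sum_UNIV_prod prod.case
    by ((simp only: sum_distrib_left sum_distrib_right)?, simp only: sum_product_UNIV,
        rule sum_UNIV_reindex_cong[of
        "\<lambda>(k1, k2, p, r, p1, r1). (p1, r1, p, r, k2, k1)" "\<lambda>(p1, r1, p, r, k2, k1). (k1, k2, p, r, p1, r1)"])
      (auto simp: mult_ac)
  finally show "(\<Sum>k\<in>UNIV. ?T i j k * ?T k l z) = (\<Sum>k\<in>UNIV. ?T j l k * ?T i k z)" .
qed

definition pure_tensor :: "('b \<Rightarrow> complex) \<Rightarrow> ('c \<Rightarrow> complex) \<Rightarrow> 'b \<times> 'c \<Rightarrow> complex" where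
  "pure_tensor x y = (\<lambda>(p, q). x p * y q)"

lemma sc_mult_basis_vec_right_apply: "sc_mult c x (basis_vec p) s = (\<Sum>a\<in>UNIV. x a * c a p s)"
  and sc_mult_basis_vec_left_apply: "sc_mult c (basis_vec p) y s = (\<Sum>b\<in>UNIV. y b * c p b s)"
  by (simp_all add: sc_mult_def basis_vec_def kron_simps mult_ac)

lemma twisted_tensor_mult_pure:
  "sc_mult (twisted_tensor pb pc c) (pure_tensor x y) (pure_tensor x' y') = (\<lambda>(s, t).
     \<Sum>p\<in>UNIV. \<Sum>r\<in>UNIV. (\<Sum>j\<in>UNIV. \<Sum>k\<in>UNIV. y j * x' k * c j k p r) *
       sc_mult pb x (basis_vec p) s * sc_mult pc (basis_vec r) y' t)"
proof (intro ext, clarify)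
  fix s t
  have "sc_mult (twisted_tensor pb pc c) (pure_tensor x y) (pure_tensor x' y') (s, t) =
     (\<Sum>a\<in>UNIV. \<Sum>j\<in>UNIV. \<Sum>k\<in>UNIV. \<Sum>b\<in>UNIV. x a * y j * (x' k * y' b) *
        (\<Sum>p\<in>UNIV. \<Sum>r\<in>UNIV. c j k p r * pb a p s * pc r b t))"
    by (simp add: sc_mult_def twisted_tensor_def pure_tensor_def sum_UNIV_prod)
  also have "\<dots> = (\<Sum>p\<in>UNIV. \<Sum>r\<in>UNIV. (\<Sum>j\<in>UNIV. \<Sum>k\<in>UNIV. y j * x' k * c j k p r) *
       (\<Sum>a\<in>UNIV. x a * pb a p s) * (\<Sum>b\<in>UNIV. y' b * pc r b t))"
    by ((simp only: sum_distrib_left sum_distrib_right)?, simp only: sum_product_UNIV,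
        rule sum_UNIV_reindex_cong[of "\<lambda>(p, r, b, a, j, k). (a, j, k, b, p, r)"
          "\<lambda>(a, j, k, b, p, r). (p, r, b, a, j, k)"]) (auto simp: mult_ac)
  finally show "sc_mult (twisted_tensor pb pc c) (pure_tensor x y) (pure_tensor x' y') (s, t) =
     (\<Sum>p\<in>UNIV. \<Sum>r\<in>UNIV. (\<Sum>j\<in>UNIV. \<Sum>k\<in>UNIV. y j * x' k * c j k p r) *
       sc_mult pb x (basis_vec p) s * sc_mult pc (basis_vec r) y' t)"
    by (simp only: sc_mult_basis_vec_right_apply sc_mult_basis_vec_left_apply)
qed

lemma twisted_tensor_mult_unit_right:
  assumes "sc_unit pb e" and "\<And>j p r. (\<Sum>k\<in>UNIV. e k * c j k p r) = e p * kron j r"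
  shows "sc_mult (twisted_tensor pb pc c) (pure_tensor x y) (pure_tensor e y') = pure_tensor x (sc_mult pc y y')"
proof (intro ext, clarify)
  fix s t
  have c: "(\<Sum>j\<in>UNIV. \<Sum>k\<in>UNIV. y j * e k * c j k p r) = e p * y r" for p r
    using assms(2) by (simp add: mult.assoc sum_distrib_left[symmetric] kron_simps)
  have "sc_mult (twisted_tensor pb pc c) (pure_tensor x y) (pure_tensor e y') (s, t) =
      (\<Sum>p\<in>UNIV. \<Sum>r\<in>UNIV. e p * y r * sc_mult pb x (basis_vec p) s * sc_mult pc (basis_vec r) y' t)"
    by (simp only: twisted_tensor_mult_pure prod.case c)
  also have "\<dots> = (\<Sum>p\<in>UNIV. e p * sc_mult pb x (basis_vec p) s) * (\<Sum>r\<in>UNIV. y r * sc_mult pc (basis_vec r) y' t)"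
    by (simp only: sum_product) (simp add: mult_ac)
  also have "\<dots> = pure_tensor x (sc_mult pc y y') (s, t)"
    by (simp add: sum_sc_mult_basis_vec_right sum_sc_mult_basis_vec_left sc_mult_unit_right[OF assms(1)] pure_tensor_def)
  finally show "sc_mult (twisted_tensor pb pc c) (pure_tensor x y) (pure_tensor e y') (s, t) =
      pure_tensor x (sc_mult pc y y') (s, t)" .
qed

lemma twisted_tensor_mult_unit_left:
  assumes "sc_unit pc e" and "\<And>k p r. (\<Sum>j\<in>UNIV. e j * c j k p r) = kron k p * e r"
  shows "sc_mult (twisted_tensor pb pc c) (pure_tensor x e) (pure_tensor x' y') = pure_tensor (sc_mult pb x x') y'"
proof (intro ext, clarify)
  fix s t
  have c: "(\<Sum>j\<in>UNIV. \<Sum>k\<in>UNIV. e j * x' k * c j k p r) = x' p * e r" for p r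
  proof -
    have "(\<Sum>j\<in>UNIV. \<Sum>k\<in>UNIV. e j * x' k * c j k p r) = (\<Sum>k\<in>UNIV. x' k * (\<Sum>j\<in>UNIV. e j * c j k p r))"
      by (subst sum.swap) (simp add: sum_distrib_left mult_ac)
    then show ?thesis
      by (simp add: assms(2) kron_simps)
  qed
  have "sc_mult (twisted_tensor pb pc c) (pure_tensor x e) (pure_tensor x' y') (s, t) =
      (\<Sum>p\<in>UNIV. \<Sum>r\<in>UNIV. x' p * e r * sc_mult pb x (basis_vec p) s * sc_mult pc (basis_vec r) y' t)"
    by (simp only: twisted_tensor_mult_pure prod.case c)
  also have "\<dots> = (\<Sum>p\<in>UNIV. x' p * sc_mult pb x (basis_vec p) s) * (\<Sum>r\<in>UNIV. e r * sc_mult pc (basis_vec r) y' t)"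
    by (simp only: sum_product) (simp add: mult_ac)
  also have "\<dots> = pure_tensor (sc_mult pb x x') y' (s, t)"
    by (simp add: sum_sc_mult_basis_vec_right sum_sc_mult_basis_vec_left sc_mult_unit_left[OF assms(1)] pure_tensor_def)
  finally show "sc_mult (twisted_tensor pb pc c) (pure_tensor x e) (pure_tensor x' y') (s, t) =
      pure_tensor (sc_mult pb x x') y' (s, t)" .
qed

lemma twisted_tensor_mult_cross:
  assumes "sc_unit pb eb" and "sc_unit pc ec"
  shows "sc_mult (twisted_tensor pb pc c) (pure_tensor eb y) (pure_tensor x' ec) =
    (\<lambda>(s, t). \<Sum>j\<in>UNIV. \<Sum>k\<in>UNIV. y j * x' k * c j k s t)"
  using sc_mult_unit_left[OF assms(1), of "basis_vec _"] sc_mult_unit_right[OF assms(2), of "basis_vec _"]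
  by (simp add: twisted_tensor_mult_pure basis_vec_def kron_simps)

definition homogeneous :: "('b \<Rightarrow> nat) \<Rightarrow> nat \<Rightarrow> ('b \<Rightarrow> complex) \<Rightarrow> bool" where
  "homogeneous d n v \<longleftrightarrow> (\<forall>p. v p \<noteq> 0 \<longrightarrow> even (d p + n))"

definition even_sc :: "('b \<Rightarrow> nat) \<Rightarrow> ('b \<Rightarrow> 'b \<Rightarrow> 'b \<Rightarrow> complex) \<Rightarrow> bool" where
  "even_sc d c \<longleftrightarrow> (\<forall>x y z. c x y z \<noteq> 0 \<longrightarrow> even (d x + d y + d z))"

definition graded_flip :: "('b \<Rightarrow> nat) \<Rightarrow> ('c \<Rightarrow> nat) \<Rightarrow> 'c \<Rightarrow> 'b \<Rightarrow> 'b \<Rightarrow> 'c \<Rightarrow> complex" where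
  "graded_flip db dc = (\<lambda>j k p r. sgn (dc j * db k) * kron k p * kron j r)"

lemma graded_tensor_mult_pure:
  assumes "homogeneous dc ny y" and "homogeneous db nx x'"
  shows "sc_mult (twisted_tensor pb pc (graded_flip db dc)) (pure_tensor x y) (pure_tensor x' y') =
    (\<lambda>z. sgn (ny * nx) * pure_tensor (sc_mult pb x x') (sc_mult pc y y') z)"
proof (intro ext, clarify)
  fix s t
  have c: "(\<Sum>j\<in>UNIV. \<Sum>k\<in>UNIV. y j * x' k * graded_flip db dc j k p r) = sgn (ny * nx) * (x' p * y r)" for p r
  proof (cases "y r = 0 \<or> x' p = 0")
    case False
    with assms have "even (dc r + ny)" "even (db p + nx)"
      by (auto simp: homogeneous_def)
    then have "sgn (dc r * db p) = sgn (ny * nx)"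
      by (auto simp: sgn_eq_iff even_add even_mult_iff)
    then show ?thesis
      by (simp add: graded_flip_def kron_simps mult_ac)
  qed (auto simp: graded_flip_def kron_simps)
  have "sc_mult (twisted_tensor pb pc (graded_flip db dc)) (pure_tensor x y) (pure_tensor x' y') (s, t) =
      sgn (ny * nx) * ((\<Sum>p\<in>UNIV. x' p * sc_mult pb x (basis_vec p) s) * (\<Sum>r\<in>UNIV. y r * sc_mult pc (basis_vec r) y' t))"
    unfolding twisted_tensor_mult_pure prod.case c by (simp add: sum_distrib_left sum_distrib_right mult_ac)
  then show "sc_mult (twisted_tensor pb pc (graded_flip db dc)) (pure_tensor x y) (pure_tensor x' y') (s, t) =
      sgn (ny * nx) * pure_tensor (sc_mult pb x x') (sc_mult pc y y') (s, t)"
    by (simp add: sum_sc_mult_basis_vec_left sum_sc_mult_basis_vec_right pure_tensor_def)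
qed

lemma twisting_map_graded_flip:
  assumes "even_sc db pb" and "even_sc dc pc"
  shows "twisting_map pb pc (graded_flip db dc)"
  unfolding twisting_map_def
proof (intro conjI allI)
  fix b g g' p r
  have "(\<Sum>k\<in>UNIV. pb g g' k * graded_flip db dc b k p r) = sgn (dc b * db p) * kron b r * pb g g' p"
    by (simp add: graded_flip_def kron_simps mult_ac)
  also have "\<dots> = sgn (dc b * db g + dc b * db g') * kron b r * pb g g' p"
    using assms(1) by (cases "pb g g' p = 0")
      (auto simp: even_sc_def sgn_eq_iff even_add even_mult_iff)
  also have "\<dots> = (\<Sum>p1\<in>UNIV. \<Sum>r1\<in>UNIV. \<Sum>p2\<in>UNIV.
      graded_flip db dc b g p1 r1 * graded_flip db dc r1 g' p2 r * pb p1 p2 p)"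
    by (simp add: graded_flip_def kron_simps sgn_add mult_ac)
  finally show "(\<Sum>k\<in>UNIV. pb g g' k * graded_flip db dc b k p r) = \<dots>" .
next
  fix b b' g p r
  have "(\<Sum>k\<in>UNIV. pc b b' k * graded_flip db dc k g p r) = sgn (dc r * db g) * kron g p * pc b b' r"
    by (simp add: graded_flip_def kron_simps mult_ac)
  also have "\<dots> = sgn (dc b' * db g + dc b * db g) * kron g p * pc b b' r"
    using assms(2) by (cases "pc b b' r = 0")
      (auto simp: even_sc_def sgn_eq_iff even_add even_mult_iff)
  also have "\<dots> = (\<Sum>p1\<in>UNIV. \<Sum>r1\<in>UNIV. \<Sum>r2\<in>UNIV.
      graded_flip db dc b' g p1 r1 * graded_flip db dc b p1 p r2 * pc r2 r1 r)"
    by (simp add: graded_flip_def kron_simps sgn_add mult_ac)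
  finally show "(\<Sum>k\<in>UNIV. pc b b' k * graded_flip db dc k g p r) = \<dots>" .
qed

section \<open>Graded Hopf algebras\<close>

locale graded_hopf_algebra =
  fixes deg :: "'i::finite \<Rightarrow> nat"
    and m mu :: "'i \<Rightarrow> 'i \<Rightarrow> 'i \<Rightarrow> complex"
    and u eps :: "'i \<Rightarrow> complex"
    and S Sinv :: "'i \<Rightarrow> 'i \<Rightarrow> complex"
  assumes hopf: "graded_hopf deg m u mu eps S"
    and antipode_invertible: "inverse_coeffs S Sinv"
begin

lemma m_even: "m g a b \<noteq> 0 \<Longrightarrow> even (deg g + deg a + deg b)"
  and mu_even: "mu a b c \<noteq> 0 \<Longrightarrow> even (deg a + deg b + deg c)"
  and u_even: "u a \<noteq> 0 \<Longrightarrow> even (deg a)"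
  and eps_even: "eps a \<noteq> 0 \<Longrightarrow> even (deg a)"
  and S_even: "S a b \<noteq> 0 \<Longrightarrow> even (deg a + deg b)"
  and m_assoc: "(\<Sum>k\<in>UNIV. m k a b * m d k c) = (\<Sum>k\<in>UNIV. m k b c * m d a k)"
  and unit_left: "(\<Sum>k\<in>UNIV. u k * m d k a) = kron d a"
  and unit_right: "(\<Sum>k\<in>UNIV. u k * m d a k) = kron d a"
  and coassoc: "(\<Sum>k\<in>UNIV. mu a k c * mu k r s) = (\<Sum>k\<in>UNIV. mu a r k * mu k s c)"
  and counit_left: "(\<Sum>b\<in>UNIV. eps b * mu a b c) = kron a c"
  and counit_right: "(\<Sum>c\<in>UNIV. eps c * mu a b c) = kron a b"
  and comult_mult: "(\<Sum>g\<in>UNIV. m g a b * mu g r s) =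
       (\<Sum>r1\<in>UNIV. \<Sum>s1\<in>UNIV. \<Sum>r2\<in>UNIV. \<Sum>s2\<in>UNIV.
          sgn (deg s1 * deg r2) * mu a r1 s1 * mu b r2 s2 * m r r1 r2 * m s s1 s2)"
  and comult_unit: "(\<Sum>g\<in>UNIV. u g * mu g r s) = u r * u s"
  and counit_mult: "(\<Sum>g\<in>UNIV. m g a b * eps g) = eps a * eps b"
  and counit_unit: "(\<Sum>g\<in>UNIV. u g * eps g) = 1"
  and antipode_left: "(\<Sum>b\<in>UNIV. \<Sum>c\<in>UNIV. \<Sum>k\<in>UNIV. mu a b c * S b k * m d k c) = eps a * u d"
  and antipode_right: "(\<Sum>b\<in>UNIV. \<Sum>c\<in>UNIV. \<Sum>k\<in>UNIV. mu a b c * S c k * m d b k) = eps a * u d"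
  and S_Sinv: "(\<Sum>k\<in>UNIV. S a k * Sinv k b) = kron a b"
  and Sinv_S: "(\<Sum>k\<in>UNIV. Sinv a k * S k b) = kron a b"
  using hopf antipode_invertible unfolding graded_hopf_def inverse_coeffs_def by simp_all

lemma sgn_to_front:
  "m x y w * (sgn z * c) = sgn z * (m x y w * c)" "m x y w * sgn z = sgn z * m x y w"
  "mu x y w * (sgn z * c) = sgn z * (mu x y w * c)" "mu x y w * sgn z = sgn z * mu x y w"
  "u x * (sgn z * c) = sgn z * (u x * c)" "u x * sgn z = sgn z * u x"
  "eps x * (sgn z * c) = sgn z * (eps x * c)" "eps x * sgn z = sgn z * eps x"
  "S x y * (sgn z * c) = sgn z * (S x y * c)" "S x y * sgn z = sgn z * S x y"
  "Sinv x y * (sgn z * c) = sgn z * (Sinv x y * c)" "Sinv x y * sgn z = sgn z * Sinv x y"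
  "kron x y * (sgn z * c) = sgn z * (kron x y * c)" "kron x y * sgn z = sgn z * kron x y"
  by (simp_all add: mult_ac)

lemmas sign_normalize = mult.assoc sgn_mult_sgn sgn_to_front

lemma S_unit: "(\<Sum>b\<in>UNIV. u b * S b d) = u d"
proof -
  let ?A = "\<lambda>a. \<Sum>b\<in>UNIV. \<Sum>c\<in>UNIV. \<Sum>k\<in>UNIV. mu a b c * S b k * m d k c"
  have "(\<Sum>a\<in>UNIV. u a * ?A a) = (\<Sum>a\<in>UNIV. u a * eps a) * u d"
    by (simp only: antipode_left) (simp add: sum_distrib_right mult.assoc)
  then have lhs: "(\<Sum>a\<in>UNIV. u a * ?A a) = u d"
    by (simp add: counit_unit)
  have "(\<Sum>a\<in>UNIV. u a * ?A a) = (\<Sum>b\<in>UNIV. \<Sum>c\<in>UNIV. \<Sum>k\<in>UNIV. S b k * m d k c * (\<Sum>a\<in>UNIV. u a * mu a b c))"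
    by ((simp only: sum_distrib_left sum_distrib_right)?, simp only: sum_product_UNIV,
        rule sum_UNIV_reindex_cong[of "\<lambda>(b, c, k, a). (a, b, c, k)" "\<lambda>(a, b, c, k). (b, c, k, a)"])
      (auto simp: mult_ac)
  also have "\<dots> = (\<Sum>k\<in>UNIV. (\<Sum>b\<in>UNIV. u b * S b k) * (\<Sum>c\<in>UNIV. u c * m d k c))"
    unfolding comult_unit
    by ((simp only: sum_distrib_left sum_distrib_right)?, simp only: sum_product_UNIV,
        rule sum_UNIV_reindex_cong[of "\<lambda>(k, c, b). (b, c, k)" "\<lambda>(b, c, k). (k, c, b)"]) (auto simp: mult_ac)
  also have "\<dots> = (\<Sum>b\<in>UNIV. u b * S b d)"
    by (simp add: unit_right kron_simps)
  finally show ?thesis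
    using lhs by simp
qed

text \<open>The commutator of Sinv with the parity operator is annihilated by S, because S is even.\<close>

lemma Sinv_even: "Sinv x y \<noteq> 0 \<Longrightarrow> even (deg x + deg y)"
proof -
  define comm where "comm k b = sgn (deg k) * Sinv k b - Sinv k b * sgn (deg b)" for k b
  have S_comm: "(\<Sum>k\<in>UNIV. S c k * comm k b) = 0" for c b
  proof -
    have S_parity: "S c k * (sgn (deg k) * Sinv k b) = sgn (deg c) * (S c k * Sinv k b)" for k
      by (cases "S c k = 0") (auto simp: sgn_if dest!: S_even)
    have "(\<Sum>k\<in>UNIV. S c k * (sgn (deg k) * Sinv k b)) = sgn (deg c) * kron c b"
      unfolding S_parity by (simp add: sum_distrib_left[symmetric] S_Sinv)
    moreover have "(\<Sum>k\<in>UNIV. S c k * (Sinv k b * sgn (deg b))) = kron c b * sgn (deg b)"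
      by (simp add: sum_distrib_right[symmetric] S_Sinv mult.assoc[symmetric])
    ultimately show ?thesis
      unfolding comm_def by (simp add: right_diff_distrib sum_subtractf kron_def)
  qed
  have "(\<Sum>c\<in>UNIV. Sinv x c * (\<Sum>k\<in>UNIV. S c k * comm k y)) = (\<Sum>k\<in>UNIV. (\<Sum>c\<in>UNIV. Sinv x c * S c k) * comm k y)"
    by ((simp only: sum_distrib_left sum_distrib_right)?, simp only: sum_product_UNIV,
        rule sum_UNIV_reindex_cong[of "\<lambda>(k, c). (c, k)" "\<lambda>(c, k). (k, c)"]) (auto simp: mult_ac)
  then have "comm x y = 0"
    by (simp add: S_comm Sinv_S kron_simps)
  moreover assume "Sinv x y \<noteq> 0"
  ultimately have "sgn (deg x) = sgn (deg y)"
    by (simp add: comm_def)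
  then show ?thesis
    by (simp add: sgn_eq_iff)
qed

lemmas nonzero_even = m_even mu_even u_even eps_even S_even Sinv_even

text \<open>Convolution of bilinear maps A \<otimes> A \<rightarrow> A, where A \<otimes> A carries the graded tensor product
  coalgebra structure.\<close>

definition conv :: "('i \<Rightarrow> 'i \<Rightarrow> 'i \<Rightarrow> complex) \<Rightarrow> ('i \<Rightarrow> 'i \<Rightarrow> 'i \<Rightarrow> complex) \<Rightarrow> 'i \<Rightarrow> 'i \<Rightarrow> 'i \<Rightarrow> complex" where
  "conv H1 H2 x y j = (\<Sum>x1\<in>UNIV. \<Sum>x2\<in>UNIV. \<Sum>y1\<in>UNIV. \<Sum>y2\<in>UNIV. \<Sum>p\<in>UNIV. \<Sum>q\<in>UNIV.
     sgn (deg x2 * deg y1) * mu x x1 x2 * mu y y1 y2 * H1 x1 y1 p * H2 x2 y2 q * m j p q)"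

definition conv_unit where
  "conv_unit x y j = eps x * eps y * u j"

lemma conv_assoc: "conv (conv H1 H2) H3 = conv H1 (conv H2 H3)"
proof (intro ext)
  fix x y j
  have H_sgn:
    "H1 x1 y1 z1 * (sgn w * c) = sgn w * (H1 x1 y1 z1 * c)" "H1 x1 y1 z1 * sgn w = sgn w * H1 x1 y1 z1"
    "H2 x1 y1 z1 * (sgn w * c) = sgn w * (H2 x1 y1 z1 * c)" "H2 x1 y1 z1 * sgn w = sgn w * H2 x1 y1 z1"
    "H3 x1 y1 z1 * (sgn w * c) = sgn w * (H3 x1 y1 z1 * c)" "H3 x1 y1 z1 * sgn w = sgn w * H3 x1 y1 z1"
    for x1 y1 z1 w c by (simp_all add: mult_ac)
  have "conv (conv H1 H2) H3 x y j = (\<Sum>x11\<in>UNIV. \<Sum>x12\<in>UNIV. \<Sum>x2\<in>UNIV. \<Sum>y11\<in>UNIV. \<Sum>y12\<in>UNIV. \<Sum>y2\<in>UNIV.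
      \<Sum>p1\<in>UNIV. \<Sum>q1\<in>UNIV. \<Sum>q\<in>UNIV.
      sgn (deg x2 * (deg y11 + deg y12) + deg x12 * deg y11) * H1 x11 y11 p1 * H2 x12 y12 q1 * H3 x2 y2 q *
      (\<Sum>x1\<in>UNIV. mu x x1 x2 * mu x1 x11 x12) * (\<Sum>y1\<in>UNIV. mu y y1 y2 * mu y1 y11 y12) * (\<Sum>p\<in>UNIV. m p p1 q1 * m j p q))"
    unfolding conv_def
    by ((simp only: sum_distrib_left sum_distrib_right)?, simp only: sum_product_UNIV,
        rule sum_UNIV_reindex_cong[of "\<lambda>(x11, x12, x2, y11, y12, y2, p1, q1, q, p, y1, x1). (x1, x2, y1, y2, p, q, x11, x12, y11, y12, p1, q1)"
          "\<lambda>(x1, x2, y1, y2, p, q, x11, x12, y11, y12, p1, q1). (x11, x12, x2, y11, y12, y2, p1, q1, q, p, y1, x1)"],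
        simp_all only: split_paired_all prod.case,
        rule sgn_0_cancel, simp only: sign_normalize H_sgn, rule sgn_mult_cong, simp add: mult_ac,
        (simp only: nonzero_factors)?, ((drule nonzero_even)+, simp only: parity_simps, argo?)?)
  also have "\<dots> = (\<Sum>x11\<in>UNIV. \<Sum>x12\<in>UNIV. \<Sum>x2\<in>UNIV. \<Sum>y11\<in>UNIV. \<Sum>y12\<in>UNIV. \<Sum>y2\<in>UNIV.
      \<Sum>p1\<in>UNIV. \<Sum>q1\<in>UNIV. \<Sum>q\<in>UNIV.
      sgn (deg x2 * (deg y11 + deg y12) + deg x12 * deg y11) * H1 x11 y11 p1 * H2 x12 y12 q1 * H3 x2 y2 q *
      (\<Sum>k\<in>UNIV. mu x x11 k * mu k x12 x2) * (\<Sum>k\<in>UNIV. mu y y11 k * mu k y12 y2) * (\<Sum>k\<in>UNIV. m k q1 q * m j p1 k))"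
    by (simp only: coassoc m_assoc)
  also have "\<dots> = (\<Sum>a1\<in>UNIV. \<Sum>b1\<in>UNIV. \<Sum>c1\<in>UNIV. \<Sum>d1\<in>UNIV. \<Sum>e1\<in>UNIV. \<Sum>f1\<in>UNIV.
      \<Sum>p1\<in>UNIV. \<Sum>p2\<in>UNIV. \<Sum>p3\<in>UNIV. \<Sum>k1\<in>UNIV. \<Sum>k2\<in>UNIV. \<Sum>k3\<in>UNIV.
      sgn (deg c1 * deg d1 + deg c1 * deg e1 + deg b1 * deg d1) * mu x a1 k1 * mu k1 b1 c1 * mu y d1 k2 * mu k2 e1 f1 *
      H1 a1 d1 p1 * H2 b1 e1 p2 * H3 c1 f1 p3 * m k3 p2 p3 * m j p1 k3)"
    by ((simp only: sum_distrib_left sum_distrib_right)?, simp only: sum_product_UNIV,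
        rule sum_UNIV_reindex_cong[of "\<lambda>(a1, b1, c1, d1, e1, f1, p1, p2, p3, k1, k2, k3). (a1, b1, c1, d1, e1, f1, p1, p2, p3, k3, k2, k1)"
          "\<lambda>(a1, b1, c1, d1, e1, f1, p1, p2, p3, k3, k2, k1). (a1, b1, c1, d1, e1, f1, p1, p2, p3, k1, k2, k3)"],
        simp_all only: split_paired_all prod.case,
        rule sgn_0_cancel, simp only: sign_normalize H_sgn, rule sgn_mult_cong, simp add: mult_ac,
        (simp only: nonzero_factors)?, ((drule nonzero_even)+, simp only: parity_simps, argo?)?)
  also have "\<dots> = conv H1 (conv H2 H3) x y j"
    unfolding conv_def
    by ((simp only: sum_distrib_left sum_distrib_right)?, simp only: sum_product_UNIV,
        rule sum_UNIV_reindex_cong[of "\<lambda>(a1, k1, d1, k2, p1, k3, b1, c1, e1, f1, p2, p3). (a1, b1, c1, d1, e1, f1, p1, p2, p3, k1, k2, k3)"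
          "\<lambda>(a1, b1, c1, d1, e1, f1, p1, p2, p3, k1, k2, k3). (a1, k1, d1, k2, p1, k3, b1, c1, e1, f1, p2, p3)"],
        simp_all only: split_paired_all prod.case,
        rule sgn_0_cancel, simp only: sign_normalize H_sgn, rule sgn_mult_cong, simp add: mult_ac,
        (simp only: nonzero_factors)?, ((drule nonzero_even)+, simp only: parity_simps, argo?)?)
  finally show "conv (conv H1 H2) H3 x y j = conv H1 (conv H2 H3) x y j" .
qed


lemma conv_unit_right: "conv H conv_unit = H"
proof (intro ext)
  fix x y j
  have H_sgn: "H x1 y1 z1 * (sgn w * c) = sgn w * (H x1 y1 z1 * c)" "H x1 y1 z1 * sgn w = sgn w * H x1 y1 z1"
    for x1 y1 z1 w c by (simp_all add: mult_ac)
  have "conv H conv_unit x y j = (\<Sum>x1\<in>UNIV. \<Sum>y1\<in>UNIV. \<Sum>p\<in>UNIV. H x1 y1 p * (\<Sum>x2\<in>UNIV. eps x2 * mu x x1 x2) *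
     (\<Sum>y2\<in>UNIV. eps y2 * mu y y1 y2) * (\<Sum>q\<in>UNIV. u q * m j p q))"
    unfolding conv_def conv_unit_def
    by ((simp only: sum_distrib_left sum_distrib_right)?, simp only: sum_product_UNIV,
        rule sum_UNIV_reindex_cong[of "\<lambda>(x1, y1, p, q, y2, x2). (x1, x2, y1, y2, p, q)"
          "\<lambda>(x1, x2, y1, y2, p, q). (x1, y1, p, q, y2, x2)"],
        simp_all only: split_paired_all prod.case,
        rule sgn_0_cancel, simp only: sign_normalize H_sgn, rule sgn_mult_cong, simp add: mult_ac,
        (simp only: nonzero_factors)?, ((drule nonzero_even)+, simp only: parity_simps, argo?)?)
  also have "\<dots> = H x y j" by (simp only: counit_right unit_right) (simp add: kron_simps)
  finally show "conv H conv_unit x y j = H x y j" .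
qed

lemma conv_unit_left: "conv conv_unit H = H"
proof (intro ext)
  fix x y j
  have H_sgn: "H x1 y1 z1 * (sgn w * c) = sgn w * (H x1 y1 z1 * c)" "H x1 y1 z1 * sgn w = sgn w * H x1 y1 z1"
    for x1 y1 z1 w c by (simp_all add: mult_ac)
  have "conv conv_unit H x y j = (\<Sum>x2\<in>UNIV. \<Sum>y2\<in>UNIV. \<Sum>q\<in>UNIV. H x2 y2 q * (\<Sum>x1\<in>UNIV. eps x1 * mu x x1 x2) *
     (\<Sum>y1\<in>UNIV. eps y1 * mu y y1 y2) * (\<Sum>p\<in>UNIV. u p * m j p q))"
    unfolding conv_def conv_unit_def
    by ((simp only: sum_distrib_left sum_distrib_right)?, simp only: sum_product_UNIV,
        rule sum_UNIV_reindex_cong[of "\<lambda>(x2, y2, q, p, y1, x1). (x1, x2, y1, y2, p, q)"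
          "\<lambda>(x1, x2, y1, y2, p, q). (x2, y2, q, p, y1, x1)"],
        simp_all only: split_paired_all prod.case,
        rule sgn_0_cancel, simp only: sign_normalize H_sgn, rule sgn_mult_cong, simp add: mult_ac,
        (simp only: nonzero_factors)?, ((drule nonzero_even)+, simp only: parity_simps, argo?)?)
  also have "\<dots> = H x y j" by (simp only: counit_left unit_left) (simp add: kron_simps)
  finally show "conv conv_unit H x y j = H x y j" .
qed

definition antipode_comp_mult where
  "antipode_comp_mult x y j = (\<Sum>k\<in>UNIV. m k x y * S k j)"

definition mult_map where
  "mult_map x y j = m j x y"

definition mult_comp_antipodes where
  "mult_comp_antipodes x y j = sgn (deg x * deg y) * (\<Sum>p\<in>UNIV. \<Sum>q\<in>UNIV. S y p * S x q * m j p q)"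

lemma antipode_comp_mult_conv_mult: "conv antipode_comp_mult mult_map = conv_unit"
proof (intro ext)
  fix x y j
  have "conv antipode_comp_mult mult_map x y j = (\<Sum>k\<in>UNIV. \<Sum>q\<in>UNIV. \<Sum>p\<in>UNIV. S k p * m j p q *
     (\<Sum>x1\<in>UNIV. \<Sum>x2\<in>UNIV. \<Sum>y1\<in>UNIV. \<Sum>y2\<in>UNIV. sgn (deg x2 * deg y1) * mu x x1 x2 * mu y y1 y2 * m k x1 y1 * m q x2 y2))"
    unfolding conv_def antipode_comp_mult_def mult_map_def
    by ((simp only: sum_distrib_left sum_distrib_right)?, simp only: sum_product_UNIV,
        rule sum_UNIV_reindex_cong[of "\<lambda>(k, q, p, x1, x2, y1, y2). (x1, x2, y1, y2, p, q, k)"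
          "\<lambda>(x1, x2, y1, y2, p, q, k). (k, q, p, x1, x2, y1, y2)"], simp_all only: split_paired_all prod.case,
        rule sgn_0_cancel, simp only: sign_normalize, rule sgn_mult_cong, simp add: mult_ac,
        (simp only: nonzero_factors)?, ((drule nonzero_even)+, simp only: parity_simps, argo?)?)
  also have "\<dots> = (\<Sum>k\<in>UNIV. \<Sum>q\<in>UNIV. \<Sum>p\<in>UNIV. S k p * m j p q * (\<Sum>g\<in>UNIV. m g x y * mu g k q))"
    by (simp only: comult_mult)
  also have "\<dots> = (\<Sum>g\<in>UNIV. m g x y * (\<Sum>k\<in>UNIV. \<Sum>q\<in>UNIV. \<Sum>p\<in>UNIV. mu g k q * S k p * m j p q))"
    by ((simp only: sum_distrib_left sum_distrib_right)?, simp only: sum_product_UNIV,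
        rule sum_UNIV_reindex_cong[of "\<lambda>(g, k, q, p). (k, q, p, g)"
          "\<lambda>(k, q, p, g). (g, k, q, p)"], simp_all only: split_paired_all prod.case,
        rule sgn_0_cancel, simp only: sign_normalize, rule sgn_mult_cong, simp add: mult_ac,
        (simp only: nonzero_factors)?, ((drule nonzero_even)+, simp only: parity_simps, argo?)?)
  also have "\<dots> = (\<Sum>g\<in>UNIV. m g x y * eps g) * u j"
    by (simp only: antipode_left) (simp add: sum_distrib_right mult.assoc)
  also have "\<dots> = conv_unit x y j" by (simp only: counit_mult conv_unit_def)
  finally show "conv antipode_comp_mult mult_map x y j = conv_unit x y j" .
qed

lemma mult_conv_mult_comp_antipodes: "conv mult_map mult_comp_antipodes = conv_unit"
proof (intro ext)
  fix x y j
  have "conv mult_map mult_comp_antipodes x y j = (\<Sum>x1\<in>UNIV. \<Sum>x2\<in>UNIV. \<Sum>y1\<in>UNIV. \<Sum>y2\<in>UNIV. \<Sum>pp\<in>UNIV. \<Sum>qq\<in>UNIV. \<Sum>q\<in>UNIV.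
      sgn (deg x2 * deg y1 + deg x2 * deg y2) * mu x x1 x2 * mu y y1 y2 * S y2 pp * S x2 qq * m q pp qq * (\<Sum>p\<in>UNIV. m p x1 y1 * m j p q))"
    unfolding conv_def mult_map_def mult_comp_antipodes_def
    by ((simp only: sum_distrib_left sum_distrib_right)?, simp only: sum_product_UNIV,
        rule sum_UNIV_reindex_cong[of "\<lambda>(x1, x2, y1, y2, pp, qq, q, p). (x1, x2, y1, y2, p, q, pp, qq)"
          "\<lambda>(x1, x2, y1, y2, p, q, pp, qq). (x1, x2, y1, y2, pp, qq, q, p)"], simp_all only: split_paired_all prod.case,
        rule sgn_0_cancel, simp only: sign_normalize, rule sgn_mult_cong, simp add: mult_ac,
        (simp only: nonzero_factors)?, ((drule nonzero_even)+, simp only: parity_simps, argo?)?)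
  also have "\<dots> = (\<Sum>x1\<in>UNIV. \<Sum>x2\<in>UNIV. \<Sum>y1\<in>UNIV. \<Sum>y2\<in>UNIV. \<Sum>pp\<in>UNIV. \<Sum>qq\<in>UNIV. \<Sum>q\<in>UNIV.
      sgn (deg x2 * deg y1 + deg x2 * deg y2) * mu x x1 x2 * mu y y1 y2 * S y2 pp * S x2 qq * m q pp qq * (\<Sum>k\<in>UNIV. m k y1 q * m j x1 k))"
    by (simp only: m_assoc)
  also have "\<dots> = (\<Sum>x1\<in>UNIV. \<Sum>x2\<in>UNIV. \<Sum>y1\<in>UNIV. \<Sum>y2\<in>UNIV. \<Sum>pp\<in>UNIV. \<Sum>qq\<in>UNIV. \<Sum>k\<in>UNIV.
      sgn (deg x2 * deg y1 + deg x2 * deg y2) * mu x x1 x2 * mu y y1 y2 * S y2 pp * S x2 qq * m j x1 k * (\<Sum>q\<in>UNIV. m q pp qq * m k y1 q))"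
    by ((simp only: sum_distrib_left sum_distrib_right)?, simp only: sum_product_UNIV,
        rule sum_UNIV_reindex_cong[of "\<lambda>(x1, x2, y1, y2, pp, qq, k, q). (x1, x2, y1, y2, pp, qq, q, k)"
          "\<lambda>(x1, x2, y1, y2, pp, qq, q, k). (x1, x2, y1, y2, pp, qq, k, q)"], simp_all only: split_paired_all prod.case,
        rule sgn_0_cancel, simp only: sign_normalize, rule sgn_mult_cong, simp add: mult_ac,
        (simp only: nonzero_factors)?, ((drule nonzero_even)+, simp only: parity_simps, argo?)?)
  also have "\<dots> = (\<Sum>x1\<in>UNIV. \<Sum>x2\<in>UNIV. \<Sum>y1\<in>UNIV. \<Sum>y2\<in>UNIV. \<Sum>pp\<in>UNIV. \<Sum>qq\<in>UNIV. \<Sum>k\<in>UNIV.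
      sgn (deg x2 * deg y1 + deg x2 * deg y2) * mu x x1 x2 * mu y y1 y2 * S y2 pp * S x2 qq * m j x1 k * (\<Sum>r\<in>UNIV. m r y1 pp * m k r qq))"
    by (simp only: m_assoc[symmetric])
  also have "\<dots> = (\<Sum>x1\<in>UNIV. \<Sum>x2\<in>UNIV. \<Sum>qq\<in>UNIV. \<Sum>k\<in>UNIV. \<Sum>r\<in>UNIV.
      sgn (deg x2 * deg y) * mu x x1 x2 * S x2 qq * m j x1 k * m k r qq * (\<Sum>y1\<in>UNIV. \<Sum>y2\<in>UNIV. \<Sum>pp\<in>UNIV. mu y y1 y2 * S y2 pp * m r y1 pp))"
    by ((simp only: sum_distrib_left sum_distrib_right)?, simp only: sum_product_UNIV,
        rule sum_UNIV_reindex_cong[of "\<lambda>(x1, x2, qq, k, r, y1, y2, pp). (x1, x2, y1, y2, pp, qq, k, r)"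
          "\<lambda>(x1, x2, y1, y2, pp, qq, k, r). (x1, x2, qq, k, r, y1, y2, pp)"], simp_all only: split_paired_all prod.case,
        rule sgn_0_cancel, simp only: sign_normalize, rule sgn_mult_cong, simp add: mult_ac,
        (simp only: nonzero_factors)?, ((drule nonzero_even)+, simp only: parity_simps, argo?)?)
  also have "\<dots> = (\<Sum>x1\<in>UNIV. \<Sum>x2\<in>UNIV. \<Sum>qq\<in>UNIV. \<Sum>k\<in>UNIV. \<Sum>r\<in>UNIV.
      sgn (deg x2 * deg y) * mu x x1 x2 * S x2 qq * m j x1 k * m k r qq * (eps y * u r))"
    by (simp only: antipode_right)
  also have "\<dots> = (\<Sum>x1\<in>UNIV. \<Sum>x2\<in>UNIV. \<Sum>qq\<in>UNIV. \<Sum>k\<in>UNIV.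
      sgn (deg x2 * deg y) * mu x x1 x2 * S x2 qq * m j x1 k * eps y * (\<Sum>r\<in>UNIV. u r * m k r qq))"
    by (simp add: sum_distrib_left mult_ac)
  also have "\<dots> = (\<Sum>x1\<in>UNIV. \<Sum>x2\<in>UNIV. \<Sum>qq\<in>UNIV. \<Sum>k\<in>UNIV.
      sgn (deg x2 * deg y) * mu x x1 x2 * S x2 qq * m j x1 k * eps y * kron k qq)"
    by (simp only: unit_left)
  also have "\<dots> = (\<Sum>x1\<in>UNIV. \<Sum>x2\<in>UNIV. \<Sum>qq\<in>UNIV.
      sgn (deg x2 * deg y) * mu x x1 x2 * S x2 qq * m j x1 qq * eps y)"
    by (simp add: kron_simps)
  also have "\<dots> = eps y * (\<Sum>x1\<in>UNIV. \<Sum>x2\<in>UNIV. \<Sum>qq\<in>UNIV. mu x x1 x2 * S x2 qq * m j x1 qq)"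
    by ((simp only: sum_distrib_left sum_distrib_right)?, simp only: sum_product_UNIV,
        rule sum_UNIV_reindex_cong[of "\<lambda>(x1, x2, qq). (x1, x2, qq)"
          "\<lambda>(x1, x2, qq). (x1, x2, qq)"], simp_all only: split_paired_all prod.case,
        rule sgn_0_cancel, simp only: sign_normalize, rule sgn_mult_cong, simp add: mult_ac,
        (simp only: nonzero_factors)?, ((drule nonzero_even)+, simp only: parity_simps, argo?)?)
  also have "\<dots> = conv_unit x y j" by (simp only: antipode_right conv_unit_def) (simp add: mult_ac)
  finally show "conv mult_map mult_comp_antipodes x y j = conv_unit x y j" .
qed

text \<open>Both maps are convolution inverses of the multiplication, hence S(e_x e_y) = (-1)^{|x||y|} S(e_y) S(e_x).\<close>

lemma antipode_comp_mult_eq: "antipode_comp_mult = mult_comp_antipodes"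
proof -
  have "antipode_comp_mult = conv antipode_comp_mult conv_unit" by (simp add: conv_unit_right)
  also have "\<dots> = conv antipode_comp_mult (conv mult_map mult_comp_antipodes)" by (simp add: mult_conv_mult_comp_antipodes)
  also have "\<dots> = conv (conv antipode_comp_mult mult_map) mult_comp_antipodes" by (simp add: conv_assoc)
  also have "\<dots> = mult_comp_antipodes" by (simp add: antipode_comp_mult_conv_mult conv_unit_left)
  finally show ?thesis .
qed

lemma antipode_mult:
  "(\<Sum>k\<in>UNIV. m k x y * S k j) = sgn (deg x * deg y) * (\<Sum>p\<in>UNIV. \<Sum>q\<in>UNIV. S y p * S x q * m j p q)"
  using antipode_comp_mult_eq unfolding antipode_comp_mult_def mult_comp_antipodes_def by meson

lemma antipode_Sinv_cancel: "(\<Sum>j\<in>UNIV. (\<Sum>k\<in>UNIV. A k * S k j) * Sinv j l) = A l"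
proof -
  have "(\<Sum>j\<in>UNIV. (\<Sum>k\<in>UNIV. A k * S k j) * Sinv j l) = (\<Sum>k\<in>UNIV. A k * (\<Sum>j\<in>UNIV. S k j * Sinv j l))"
    by ((simp only: sum_distrib_left sum_distrib_right)?, simp only: sum_product_UNIV,
        rule sum_UNIV_reindex_cong[of "\<lambda>(k, j). (j, k)"
          "\<lambda>(j, k). (k, j)"]) (auto simp: mult_ac)
  also have "\<dots> = A l" by (simp add: S_Sinv kron_simps)
  finally show ?thesis .
qed

lemma antipode_cancel: "(\<And>j. (\<Sum>k\<in>UNIV. A k * S k j) = (\<Sum>k\<in>UNIV. B k * S k j)) \<Longrightarrow> A l = B l"
  using antipode_Sinv_cancel[of A l] antipode_Sinv_cancel[of B l] by simp

lemma Sinv_twisted_antipode: "(\<Sum>e\<in>UNIV. \<Sum>f\<in>UNIV. \<Sum>d\<in>UNIV. sgn (deg e * deg f) * mu g e f * Sinv e d * m k f d) = eps g * u k"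
proof (rule antipode_cancel[where A="\<lambda>k. \<Sum>e\<in>UNIV. \<Sum>f\<in>UNIV. \<Sum>d\<in>UNIV. sgn (deg e * deg f) * mu g e f * Sinv e d * m k f d" and B="\<lambda>k. eps g * u k"])
  fix j
  have "(\<Sum>k\<in>UNIV. (\<Sum>e\<in>UNIV. \<Sum>f\<in>UNIV. \<Sum>d\<in>UNIV. sgn (deg e * deg f) * mu g e f * Sinv e d * m k f d) * S k j) =
    (\<Sum>e\<in>UNIV. \<Sum>f\<in>UNIV. \<Sum>d\<in>UNIV. sgn (deg e * deg f) * mu g e f * Sinv e d * (\<Sum>k\<in>UNIV. m k f d * S k j))"
    by ((simp only: sum_distrib_left sum_distrib_right)?, simp only: sum_product_UNIV,
        rule sum_UNIV_reindex_cong[of "\<lambda>(e, f, d, k). (k, e, f, d)"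
          "\<lambda>(k, e, f, d). (e, f, d, k)"]) (auto simp: mult_ac)
  also have "\<dots> = (\<Sum>e\<in>UNIV. \<Sum>f\<in>UNIV. \<Sum>d\<in>UNIV. sgn (deg e * deg f) * mu g e f * Sinv e d *
     (sgn (deg f * deg d) * (\<Sum>p\<in>UNIV. \<Sum>q\<in>UNIV. S d p * S f q * m j p q)))"
    by (simp only: antipode_mult)
  also have "\<dots> = (\<Sum>e\<in>UNIV. \<Sum>f\<in>UNIV. \<Sum>q\<in>UNIV. \<Sum>p\<in>UNIV. mu g e f * S f q * m j p q * (\<Sum>d\<in>UNIV. Sinv e d * S d p))"
    by ((simp only: sum_distrib_left sum_distrib_right)?, simp only: sum_product_UNIV,
        rule sum_UNIV_reindex_cong[of "\<lambda>(e, f, q, p, d). (e, f, d, p, q)"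
          "\<lambda>(e, f, d, p, q). (e, f, q, p, d)"], simp_all only: split_paired_all prod.case,
        rule sgn_0_cancel, simp only: sign_normalize, rule sgn_mult_cong, simp add: mult_ac,
        (simp only: nonzero_factors)?, ((drule nonzero_even)+, simp only: parity_simps, argo?)?)
  also have "\<dots> = (\<Sum>e\<in>UNIV. \<Sum>f\<in>UNIV. \<Sum>q\<in>UNIV. mu g e f * S f q * m j e q)"
    by (simp add: Sinv_S kron_simps)
  also have "\<dots> = eps g * u j" by (rule antipode_right)
  also have "\<dots> = (\<Sum>k\<in>UNIV. eps g * u k * S k j)"
    by (simp add: mult.assoc sum_distrib_left[symmetric] S_unit)
  finally show "(\<Sum>k\<in>UNIV. (\<Sum>e\<in>UNIV. \<Sum>f\<in>UNIV. \<Sum>d\<in>UNIV. sgn (deg e * deg f) * mu g e f * Sinv e d * m k f d) * S k j) =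
    (\<Sum>k\<in>UNIV. eps g * u k * S k j)" .
qed


section \<open>The Heisenberg doubles as twisted tensor products\<close>

definition alg_mult :: "'i \<Rightarrow> 'i \<Rightarrow> 'i \<Rightarrow> complex" where
  "alg_mult x y z = m z x y"

text \<open>The multiplication of the graded dual A*, e^x e^y = (-1)^{|x||y|} \<Sum> mu^{xy}_z e^z,
  as in the defining relations of D(A).\<close>

definition dual_mult :: "'i \<Rightarrow> 'i \<Rightarrow> 'i \<Rightarrow> complex" where
  "dual_mult x y z = sgn (deg x * deg y) * mu z x y"

lemma sc_associative_alg_mult: "sc_associative alg_mult"
  unfolding sc_associative_def alg_mult_def by (simp add: m_assoc)

lemma sc_associative_dual_mult: "sc_associative dual_mult"
  unfolding sc_associative_def
proof (intro allI)
  fix x y z w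
  let ?s = "sgn (deg x * deg y + deg y * deg z + deg x * deg z)"
  have left: "dual_mult x y k * dual_mult k z w = ?s * (mu w k z * mu k x y)" for k
  proof (cases "mu w k z * mu k x y = 0")
    case False
    then show ?thesis
      using mu_even[of w k z] mu_even[of k x y] by (auto simp: dual_mult_def sgn_if even_add even_mult_iff)
  qed (auto simp: dual_mult_def)
  have right: "dual_mult y z k * dual_mult x k w = ?s * (mu w x k * mu k y z)" for k
  proof (cases "mu w x k * mu k y z = 0")
    case False
    then show ?thesis
      using mu_even[of w x k] mu_even[of k y z] by (auto simp: dual_mult_def sgn_if even_add even_mult_iff)
  qed (auto simp: dual_mult_def)
  show "(\<Sum>k\<in>UNIV. dual_mult x y k * dual_mult k z w) = (\<Sum>k\<in>UNIV. dual_mult y z k * dual_mult x k w)"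
    by (simp add: left right sum_distrib_left[symmetric] coassoc)
qed

lemma sc_unit_alg_mult: "sc_unit alg_mult u"
  by (simp add: sc_unit_def alg_mult_def unit_left unit_right kron_sym)

lemma sc_unit_dual_mult: "sc_unit dual_mult eps"
proof -
  have "eps k * dual_mult k j l = eps k * mu l k j" and "eps k * dual_mult j k l = eps k * mu l j k" for j k l
    by (cases "eps k = 0") (auto simp: dual_mult_def sgn_if dest: eps_even)
  then show ?thesis
    unfolding sc_unit_def by (simp only: counit_left counit_right kron_sym, simp)
qed

text \<open>The exchange rule e_b e^g = \<Sum> HA_twist b g p r e^p e_r in H(A), read off from its product.\<close>

definition HA_twist :: "'i \<Rightarrow> 'i \<Rightarrow> 'i \<Rightarrow> 'i \<Rightarrow> complex" where
  "HA_twist b g p r = (\<Sum>e\<in>UNIV. sgn (deg b * deg g + deg p * deg e + deg e) * m g p e * mu b e r)"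

lemma HA_twist_dual_mult: "(\<Sum>k\<in>UNIV. dual_mult g g' k * HA_twist b k p r) =
      (\<Sum>p1\<in>UNIV. \<Sum>r1\<in>UNIV. \<Sum>p2\<in>UNIV. HA_twist b g p1 r1 * HA_twist r1 g' p2 r * dual_mult p1 p2 p)"
proof -
  have "(\<Sum>k\<in>UNIV. dual_mult g g' k * HA_twist b k p r) = (\<Sum>e\<in>UNIV. sgn (deg g * deg g' + deg b * deg g + deg b * deg g' + deg p * deg e + deg e) * mu b e r *
     (\<Sum>k\<in>UNIV. m k p e * mu k g g'))"
    unfolding dual_mult_def HA_twist_def
    by ((simp only: sum_distrib_left sum_distrib_right)?, simp only: sum_product_UNIV,
        rule sum_UNIV_reindex_cong[of "\<lambda>(e, k). (k, e)" "\<lambda>(k, e). (e, k)"], simp_all only: split_paired_all prod.case,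
        rule sgn_0_cancel, simp only: sign_normalize, rule sgn_mult_cong, simp add: mult_ac,
        (simp only: nonzero_factors)?, ((drule nonzero_even)+, simp only: parity_simps, argo?)?)
  also have "\<dots> = (\<Sum>e\<in>UNIV. sgn (deg g * deg g' + deg b * deg g + deg b * deg g' + deg p * deg e + deg e) * mu b e r *
     (\<Sum>r1\<in>UNIV. \<Sum>s1\<in>UNIV. \<Sum>r2\<in>UNIV. \<Sum>s2\<in>UNIV.
          sgn (deg s1 * deg r2) * mu p r1 s1 * mu e r2 s2 * m g r1 r2 * m g' s1 s2))"
    by (simp only: comult_mult)
  also have "\<dots> = (\<Sum>r1\<in>UNIV. \<Sum>s1\<in>UNIV. \<Sum>r2\<in>UNIV. \<Sum>s2\<in>UNIV.
     sgn (deg g * deg g' + deg b * deg g + deg b * deg g' + (deg p + 1) * (deg r2 + deg s2) + deg s1 * deg r2) *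
     mu p r1 s1 * m g r1 r2 * m g' s1 s2 * (\<Sum>e\<in>UNIV. mu b e r * mu e r2 s2))"
    by ((simp only: sum_distrib_left sum_distrib_right)?, simp only: sum_product_UNIV,
        rule sum_UNIV_reindex_cong[of "\<lambda>(r1, s1, r2, s2, e). (e, r1, s1, r2, s2)"
          "\<lambda>(e, r1, s1, r2, s2). (r1, s1, r2, s2, e)"], simp_all only: split_paired_all prod.case,
        rule sgn_0_cancel, simp only: sign_normalize, rule sgn_mult_cong, simp add: mult_ac,
        (simp only: nonzero_factors)?, ((drule nonzero_even)+, simp only: parity_simps, argo?)?)
  also have "\<dots> = (\<Sum>r1\<in>UNIV. \<Sum>s1\<in>UNIV. \<Sum>r2\<in>UNIV. \<Sum>s2\<in>UNIV.
     sgn (deg g * deg g' + deg b * deg g + deg b * deg g' + (deg p + 1) * (deg r2 + deg s2) + deg s1 * deg r2) *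
     mu p r1 s1 * m g r1 r2 * m g' s1 s2 * (\<Sum>k\<in>UNIV. mu b r2 k * mu k s2 r))"
    by (simp only: coassoc)
  also have "\<dots> = (\<Sum>p1\<in>UNIV. \<Sum>r1\<in>UNIV. \<Sum>p2\<in>UNIV. HA_twist b g p1 r1 * HA_twist r1 g' p2 r * dual_mult p1 p2 p)"
    unfolding HA_twist_def dual_mult_def
    by ((simp only: sum_distrib_left sum_distrib_right)?, simp only: sum_product_UNIV,
        rule sum_UNIV_reindex_cong[of "\<lambda>(r1, k, s1, s2, r2). (r1, s1, r2, s2, k)"
          "\<lambda>(r1, s1, r2, s2, k). (r1, k, s1, s2, r2)"], simp_all only: split_paired_all prod.case,
        rule sgn_0_cancel, simp only: sign_normalize, rule sgn_mult_cong, simp add: mult_ac,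
        (simp only: nonzero_factors)?, ((drule nonzero_even)+, simp only: parity_simps, argo?)?)
  finally show ?thesis .
qed

lemma HA_twist_alg_mult: "(\<Sum>k\<in>UNIV. alg_mult b b' k * HA_twist k g p r) =
      (\<Sum>p1\<in>UNIV. \<Sum>r1\<in>UNIV. \<Sum>r2\<in>UNIV. HA_twist b' g p1 r1 * HA_twist b p1 p r2 * alg_mult r2 r1 r)"
proof -
  have "(\<Sum>k\<in>UNIV. alg_mult b b' k * HA_twist k g p r) = (\<Sum>e\<in>UNIV. sgn ((deg b + deg b') * deg g + deg p * deg e + deg e) * m g p e *
     (\<Sum>k\<in>UNIV. m k b b' * mu k e r))"
    unfolding alg_mult_def HA_twist_def
    by ((simp only: sum_distrib_left sum_distrib_right)?, simp only: sum_product_UNIV,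
        rule sum_UNIV_reindex_cong[of "\<lambda>(e, k). (k, e)" "\<lambda>(k, e). (e, k)"], simp_all only: split_paired_all prod.case,
        rule sgn_0_cancel, simp only: sign_normalize, rule sgn_mult_cong, simp add: mult_ac,
        (simp only: nonzero_factors)?, ((drule nonzero_even)+, simp only: parity_simps, argo?)?)
  also have "\<dots> = (\<Sum>e\<in>UNIV. sgn ((deg b + deg b') * deg g + deg p * deg e + deg e) * m g p e *
     (\<Sum>r1\<in>UNIV. \<Sum>s1\<in>UNIV. \<Sum>r2\<in>UNIV. \<Sum>s2\<in>UNIV.
          sgn (deg s1 * deg r2) * mu b r1 s1 * mu b' r2 s2 * m e r1 r2 * m r s1 s2))"
    by (simp only: comult_mult)
  also have "\<dots> = (\<Sum>r1\<in>UNIV. \<Sum>s1\<in>UNIV. \<Sum>r2\<in>UNIV. \<Sum>s2\<in>UNIV.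
     sgn ((deg b + deg b') * deg g + (deg p + 1) * (deg r1 + deg r2) + deg s1 * deg r2) *
     mu b r1 s1 * mu b' r2 s2 * m r s1 s2 * (\<Sum>e\<in>UNIV. m e r1 r2 * m g p e))"
    by ((simp only: sum_distrib_left sum_distrib_right)?, simp only: sum_product_UNIV,
        rule sum_UNIV_reindex_cong[of "\<lambda>(r1, s1, r2, s2, e). (e, r1, s1, r2, s2)"
          "\<lambda>(e, r1, s1, r2, s2). (r1, s1, r2, s2, e)"], simp_all only: split_paired_all prod.case,
        rule sgn_0_cancel, simp only: sign_normalize, rule sgn_mult_cong, simp add: mult_ac,
        (simp only: nonzero_factors)?, ((drule nonzero_even)+, simp only: parity_simps, argo?)?)
  also have "\<dots> = (\<Sum>r1\<in>UNIV. \<Sum>s1\<in>UNIV. \<Sum>r2\<in>UNIV. \<Sum>s2\<in>UNIV.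
     sgn ((deg b + deg b') * deg g + (deg p + 1) * (deg r1 + deg r2) + deg s1 * deg r2) *
     mu b r1 s1 * mu b' r2 s2 * m r s1 s2 * (\<Sum>k\<in>UNIV. m k p r1 * m g k r2))"
    by (simp only: m_assoc[symmetric])
  also have "\<dots> = (\<Sum>p1\<in>UNIV. \<Sum>r1\<in>UNIV. \<Sum>r2\<in>UNIV. HA_twist b' g p1 r1 * HA_twist b p1 p r2 * alg_mult r2 r1 r)"
    unfolding HA_twist_def alg_mult_def
    by ((simp only: sum_distrib_left sum_distrib_right)?, simp only: sum_product_UNIV,
        rule sum_UNIV_reindex_cong[of "\<lambda>(k, s2, s1, r1, r2). (r1, s1, r2, s2, k)"
          "\<lambda>(r1, s1, r2, s2, k). (k, s2, s1, r1, r2)"], simp_all only: split_paired_all prod.case,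
        rule sgn_0_cancel, simp only: sign_normalize, rule sgn_mult_cong, simp add: mult_ac,
        (simp only: nonzero_factors)?, ((drule nonzero_even)+, simp only: parity_simps, argo?)?)
  finally show ?thesis .
qed

lemma twisting_map_HA_twist: "twisting_map dual_mult alg_mult HA_twist"
  unfolding twisting_map_def by (intro conjI allI HA_twist_dual_mult HA_twist_alg_mult)

lemma HA_const_twisted_tensor: "HA_const deg m mu = twisted_tensor dual_mult alg_mult HA_twist"
proof (intro ext, clarify)
  fix al be ga de s t
  show "HA_const deg m mu (al, be) (ga, de) (s, t) = twisted_tensor dual_mult alg_mult HA_twist (al, be) (ga, de) (s, t)"
    unfolding HA_const_def twisted_tensor_def HA_twist_def dual_mult_def alg_mult_def prod.case
    by ((simp only: sum_distrib_left sum_distrib_right)?, simp only: sum_product_UNIV,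
        rule sum_UNIV_reindex_cong[of "\<lambda>(p, r, e). (p, e, r)" "\<lambda>(p, e, r). (p, r, e)"], simp_all only: split_paired_all prod.case,
        rule sgn_0_cancel, simp only: sign_normalize, rule sgn_mult_cong, simp add: mult_ac,
        (simp only: nonzero_factors)?, ((drule nonzero_even)+, simp only: parity_simps, argo?)?)
qed

text \<open>The exchange rule \<tilde>e^b \<tilde>e_g = \<Sum> HAs_twist b g p r \<tilde>e_p \<tilde>e^r in H(A*).\<close>

definition HAs_twist :: "'i \<Rightarrow> 'i \<Rightarrow> 'i \<Rightarrow> 'i \<Rightarrow> complex" where
  "HAs_twist b g r p = (\<Sum>e\<in>UNIV. sgn (deg r * deg p + deg r * deg e) * mu g r e * m b e p)"

lemma HAs_twist_alg_mult: "(\<Sum>k\<in>UNIV. alg_mult g g' k * HAs_twist b k r p) =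
      (\<Sum>p1\<in>UNIV. \<Sum>r1\<in>UNIV. \<Sum>p2\<in>UNIV. HAs_twist b g p1 r1 * HAs_twist r1 g' p2 p * alg_mult p1 p2 r)"
proof -
  have "(\<Sum>k\<in>UNIV. alg_mult g g' k * HAs_twist b k r p) = (\<Sum>e\<in>UNIV. sgn (deg r * deg p + deg r * deg e) * m b e p *
     (\<Sum>k\<in>UNIV. m k g g' * mu k r e))"
    unfolding alg_mult_def HAs_twist_def
    by ((simp only: sum_distrib_left sum_distrib_right)?, simp only: sum_product_UNIV,
        rule sum_UNIV_reindex_cong[of "\<lambda>(e, k). (k, e)" "\<lambda>(k, e). (e, k)"], simp_all only: split_paired_all prod.case,
        rule sgn_0_cancel, simp only: sign_normalize, rule sgn_mult_cong, simp add: mult_ac,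
        (simp only: nonzero_factors)?, ((drule nonzero_even)+, simp only: parity_simps, argo?)?)
  also have "\<dots> = (\<Sum>e\<in>UNIV. sgn (deg r * deg p + deg r * deg e) * m b e p *
     (\<Sum>r1\<in>UNIV. \<Sum>s1\<in>UNIV. \<Sum>r2\<in>UNIV. \<Sum>s2\<in>UNIV.
          sgn (deg s1 * deg r2) * mu g r1 s1 * mu g' r2 s2 * m r r1 r2 * m e s1 s2))"
    by (simp only: comult_mult)
  also have "\<dots> = (\<Sum>r1\<in>UNIV. \<Sum>s1\<in>UNIV. \<Sum>r2\<in>UNIV. \<Sum>s2\<in>UNIV.
     sgn (deg r * deg p + deg r * (deg s1 + deg s2) + deg s1 * deg r2) *
     mu g r1 s1 * mu g' r2 s2 * m r r1 r2 * (\<Sum>e\<in>UNIV. m e s1 s2 * m b e p))"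
    by ((simp only: sum_distrib_left sum_distrib_right)?, simp only: sum_product_UNIV,
        rule sum_UNIV_reindex_cong[of "\<lambda>(r1, s1, r2, s2, e). (e, r1, s1, r2, s2)"
          "\<lambda>(e, r1, s1, r2, s2). (r1, s1, r2, s2, e)"], simp_all only: split_paired_all prod.case,
        rule sgn_0_cancel, simp only: sign_normalize, rule sgn_mult_cong, simp add: mult_ac,
        (simp only: nonzero_factors)?, ((drule nonzero_even)+, simp only: parity_simps, argo?)?)
  also have "\<dots> = (\<Sum>r1\<in>UNIV. \<Sum>s1\<in>UNIV. \<Sum>r2\<in>UNIV. \<Sum>s2\<in>UNIV.
     sgn (deg r * deg p + deg r * (deg s1 + deg s2) + deg s1 * deg r2) *
     mu g r1 s1 * mu g' r2 s2 * m r r1 r2 * (\<Sum>k\<in>UNIV. m k s2 p * m b s1 k))"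
    by (simp only: m_assoc)
  also have "\<dots> = (\<Sum>p1\<in>UNIV. \<Sum>r1\<in>UNIV. \<Sum>p2\<in>UNIV. HAs_twist b g p1 r1 * HAs_twist r1 g' p2 p * alg_mult p1 p2 r)"
    unfolding HAs_twist_def alg_mult_def
    by ((simp only: sum_distrib_left sum_distrib_right)?, simp only: sum_product_UNIV,
        rule sum_UNIV_reindex_cong[of "\<lambda>(r1, k, r2, s2, s1). (r1, s1, r2, s2, k)"
          "\<lambda>(r1, s1, r2, s2, k). (r1, k, r2, s2, s1)"], simp_all only: split_paired_all prod.case,
        rule sgn_0_cancel, simp only: sign_normalize, rule sgn_mult_cong, simp add: mult_ac,
        (simp only: nonzero_factors)?, ((drule nonzero_even)+, simp only: parity_simps, argo?)?)
  finally show ?thesis .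
qed

lemma HAs_twist_dual_mult: "(\<Sum>k\<in>UNIV. dual_mult b b' k * HAs_twist k g r p) =
      (\<Sum>p1\<in>UNIV. \<Sum>r1\<in>UNIV. \<Sum>r2\<in>UNIV. HAs_twist b' g p1 r1 * HAs_twist b p1 r r2 * dual_mult r2 r1 p)"
proof -
  have "(\<Sum>k\<in>UNIV. dual_mult b b' k * HAs_twist k g r p) = (\<Sum>e\<in>UNIV. sgn (deg b * deg b' + deg r * deg p + deg r * deg e) * mu g r e *
     (\<Sum>k\<in>UNIV. m k e p * mu k b b'))"
    unfolding dual_mult_def HAs_twist_def
    by ((simp only: sum_distrib_left sum_distrib_right)?, simp only: sum_product_UNIV,
        rule sum_UNIV_reindex_cong[of "\<lambda>(e, k). (k, e)" "\<lambda>(k, e). (e, k)"], simp_all only: split_paired_all prod.case,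
        rule sgn_0_cancel, simp only: sign_normalize, rule sgn_mult_cong, simp add: mult_ac,
        (simp only: nonzero_factors)?, ((drule nonzero_even)+, simp only: parity_simps, argo?)?)
  also have "\<dots> = (\<Sum>e\<in>UNIV. sgn (deg b * deg b' + deg r * deg p + deg r * deg e) * mu g r e *
     (\<Sum>r1\<in>UNIV. \<Sum>s1\<in>UNIV. \<Sum>r2\<in>UNIV. \<Sum>s2\<in>UNIV.
          sgn (deg s1 * deg r2) * mu e r1 s1 * mu p r2 s2 * m b r1 r2 * m b' s1 s2))"
    by (simp only: comult_mult)
  also have "\<dots> = (\<Sum>r1\<in>UNIV. \<Sum>s1\<in>UNIV. \<Sum>r2\<in>UNIV. \<Sum>s2\<in>UNIV.
     sgn (deg b * deg b' + deg r * deg p + deg r * (deg r1 + deg s1) + deg s1 * deg r2) *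
     mu p r2 s2 * m b r1 r2 * m b' s1 s2 * (\<Sum>e\<in>UNIV. mu g r e * mu e r1 s1))"
    by ((simp only: sum_distrib_left sum_distrib_right)?, simp only: sum_product_UNIV,
        rule sum_UNIV_reindex_cong[of "\<lambda>(r1, s1, r2, s2, e). (e, r1, s1, r2, s2)"
          "\<lambda>(e, r1, s1, r2, s2). (r1, s1, r2, s2, e)"], simp_all only: split_paired_all prod.case,
        rule sgn_0_cancel, simp only: sign_normalize, rule sgn_mult_cong, simp add: mult_ac,
        (simp only: nonzero_factors)?, ((drule nonzero_even)+, simp only: parity_simps, argo?)?)
  also have "\<dots> = (\<Sum>r1\<in>UNIV. \<Sum>s1\<in>UNIV. \<Sum>r2\<in>UNIV. \<Sum>s2\<in>UNIV.
     sgn (deg b * deg b' + deg r * deg p + deg r * (deg r1 + deg s1) + deg s1 * deg r2) *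
     mu p r2 s2 * m b r1 r2 * m b' s1 s2 * (\<Sum>k\<in>UNIV. mu g k s1 * mu k r r1))"
    by (simp only: coassoc[symmetric])
  also have "\<dots> = (\<Sum>p1\<in>UNIV. \<Sum>r1\<in>UNIV. \<Sum>r2\<in>UNIV. HAs_twist b' g p1 r1 * HAs_twist b p1 r r2 * dual_mult r2 r1 p)"
    unfolding HAs_twist_def dual_mult_def
    by ((simp only: sum_distrib_left sum_distrib_right)?, simp only: sum_product_UNIV,
        rule sum_UNIV_reindex_cong[of "\<lambda>(k, s2, r2, r1, s1). (r1, s1, r2, s2, k)"
          "\<lambda>(r1, s1, r2, s2, k). (k, s2, r2, r1, s1)"], simp_all only: split_paired_all prod.case,
        rule sgn_0_cancel, simp only: sign_normalize, rule sgn_mult_cong, simp add: mult_ac,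
        (simp only: nonzero_factors)?, ((drule nonzero_even)+, simp only: parity_simps, argo?)?)
  finally show ?thesis .
qed

lemma twisting_map_HAs_twist: "twisting_map alg_mult dual_mult HAs_twist"
  unfolding twisting_map_def by (intro conjI allI HAs_twist_alg_mult HAs_twist_dual_mult)

lemma HAs_const_twisted_tensor: "HAs_const deg m mu = twisted_tensor alg_mult dual_mult HAs_twist"
proof (intro ext, clarify)
  fix al be ga de s t
  show "HAs_const deg m mu (al, be) (ga, de) (s, t) = twisted_tensor alg_mult dual_mult HAs_twist (al, be) (ga, de) (s, t)"
    unfolding HAs_const_def twisted_tensor_def HAs_twist_def dual_mult_def alg_mult_def prod.case
    by ((simp only: sum_distrib_left sum_distrib_right)?, simp only: sum_product_UNIV,
        rule sum_UNIV_reindex_cong[of "\<lambda>(p, r, e). (r, e, p)" "\<lambda>(r, e, p). (p, r, e)"], simp_all only: split_paired_all prod.case,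
        rule sgn_0_cancel, simp only: sign_normalize, rule sgn_mult_cong, simp add: mult_ac,
        (simp only: nonzero_factors)?, ((drule nonzero_even)+, simp only: parity_simps, argo?)?)
qed

lemma HA_twist_unit_right: "(\<Sum>k\<in>UNIV. eps k * HA_twist j k p r) = eps p * kron j r"
proof -
  have drop_k: "eps k * (sgn (deg j * deg k + deg p * deg e + deg e) * m k p e * mu j e r) =
      sgn (deg p * deg e + deg e) * (m k p e * eps k) * mu j e r" for k e
    by (cases "eps k = 0") (simp_all add: sgn_add sgn_if eps_even mult_ac)
  have drop_e: "sgn (deg p * deg e + deg e) * (eps p * eps e) * mu j e r = eps p * (eps e * mu j e r)" for e
    by (cases "eps e = 0") (simp_all add: sgn_add sgn_if eps_even mult_ac)
  have "(\<Sum>k\<in>UNIV. eps k * HA_twist j k p r) =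
      (\<Sum>e\<in>UNIV. sgn (deg p * deg e + deg e) * (\<Sum>k\<in>UNIV. m k p e * eps k) * mu j e r)"
    unfolding HA_twist_def sum_distrib_left drop_k by (subst sum.swap) (simp add: sum_distrib_left sum_distrib_right)
  also have "\<dots> = eps p * kron j r"
    by (simp add: counit_mult drop_e sum_distrib_left[symmetric] counit_left)
  finally show ?thesis .
qed

lemma HA_twist_unit_left: "(\<Sum>j\<in>UNIV. u j * HA_twist j k p r) = kron k p * u r"
proof -
  have drop_j: "u j * (sgn (deg j * deg k + deg p * deg e + deg e) * m k p e * mu j e r) =
      sgn (deg p * deg e + deg e) * m k p e * (u j * mu j e r)" for j e
    by (cases "u j = 0") (simp_all add: sgn_add sgn_if u_even mult_ac)
  have drop_e: "sgn (deg p * deg e + deg e) * m k p e * (u e * u r) = u e * m k p e * u r" for e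
    by (cases "u e = 0") (simp_all add: sgn_add sgn_if u_even mult_ac)
  have "(\<Sum>j\<in>UNIV. u j * HA_twist j k p r) =
      (\<Sum>e\<in>UNIV. sgn (deg p * deg e + deg e) * m k p e * (\<Sum>j\<in>UNIV. u j * mu j e r))"
    unfolding HA_twist_def sum_distrib_left drop_j by (subst sum.swap) (simp add: sum_distrib_left)
  also have "\<dots> = kron k p * u r"
    by (simp add: comult_unit drop_e sum_distrib_right[symmetric] unit_right)
  finally show ?thesis .
qed

lemma HAs_twist_unit_right: "(\<Sum>k\<in>UNIV. u k * HAs_twist j k p r) = u p * kron j r"
proof -
  have "(\<Sum>k\<in>UNIV. u k * HAs_twist j k p r) =
      (\<Sum>e\<in>UNIV. sgn (deg p * deg r + deg p * deg e) * (\<Sum>k\<in>UNIV. u k * mu k p e) * m j e r)"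
    unfolding HAs_twist_def sum_distrib_left
    by (subst sum.swap) (simp add: sum_distrib_left sum_distrib_right mult_ac)
  also have "\<dots> = (\<Sum>e\<in>UNIV. u p * (u e * m j e r))"
  proof (intro sum.cong refl)
    fix e
    show "sgn (deg p * deg r + deg p * deg e) * (\<Sum>k\<in>UNIV. u k * mu k p e) * m j e r = u p * (u e * m j e r)"
      by (cases "u p = 0 \<or> u e = 0") (auto simp: comult_unit sgn_add sgn_if u_even)
  qed
  also have "\<dots> = u p * kron j r"
    by (simp add: sum_distrib_left[symmetric] unit_left)
  finally show ?thesis .
qed

lemma HAs_twist_unit_left: "(\<Sum>j\<in>UNIV. eps j * HAs_twist j k p r) = kron k p * eps r"
proof -
  have "(\<Sum>j\<in>UNIV. eps j * HAs_twist j k p r) =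
      (\<Sum>e\<in>UNIV. sgn (deg p * deg r + deg p * deg e) * mu k p e * (\<Sum>j\<in>UNIV. m j e r * eps j))"
    unfolding HAs_twist_def sum_distrib_left
    by (subst sum.swap) (simp add: sum_distrib_left sum_distrib_right mult_ac)
  also have "\<dots> = (\<Sum>e\<in>UNIV. eps e * mu k p e * eps r)"
  proof (intro sum.cong refl)
    fix e
    show "sgn (deg p * deg r + deg p * deg e) * mu k p e * (\<Sum>j\<in>UNIV. m j e r * eps j) = eps e * mu k p e * eps r"
      by (cases "eps r = 0 \<or> eps e = 0") (auto simp: counit_mult sgn_add sgn_if eps_even)
  qed
  also have "\<dots> = kron k p * eps r"
    by (simp add: sum_distrib_right[symmetric] counit_right)
  finally show ?thesis .
qed

section \<open>The graded tensor product H(A) \<otimes> H(A*)\<close>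

definition pair_deg :: "'i \<times> 'i \<Rightarrow> nat" where
  "pair_deg p = deg (fst p) + deg (snd p)"

lemma even_sc_HA_const: "even_sc pair_deg (HA_const deg m mu)"
  unfolding even_sc_def
proof (intro allI impI)
  fix x y z :: "'i \<times> 'i"
  assume "HA_const deg m mu x y z \<noteq> 0"
  moreover obtain al be ga de s t where "x = (al, be)" "y = (ga, de)" "z = (s, t)"
    by (cases x, cases y, cases z) blast
  ultimately obtain p e r where "sgn (deg be * deg ga + deg p * deg e + deg p * deg al + deg e) *
       m ga p e * m t r de * mu be e r * mu s al p \<noteq> 0" and xyz: "x = (al, be)" "y = (ga, de)" "z = (s, t)"
    unfolding HA_const_def by (auto elim!: sum.not_neutral_contains_not_neutral)
  then show "even (pair_deg x + pair_deg y + pair_deg z)"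
    unfolding xyz pair_deg_def fst_conv snd_conv
    by - (simp only: mult_eq_0_iff de_Morgan_disj, elim conjE, (drule nonzero_even)+, simp only: parity_simps, argo)
qed

lemma even_sc_HAs_const: "even_sc pair_deg (HAs_const deg m mu)"
  unfolding even_sc_def
proof (intro allI impI)
  fix x y z :: "'i \<times> 'i"
  assume "HAs_const deg m mu x y z \<noteq> 0"
  moreover obtain al be ga de s t where "x = (al, be)" "y = (ga, de)" "z = (s, t)"
    by (cases x, cases y, cases z) blast
  ultimately obtain p e r where "sgn (deg r * deg p + deg r * deg e + deg p * deg de) *
       mu ga r e * mu t p de * m be e p * m s al r \<noteq> 0" and xyz: "x = (al, be)" "y = (ga, de)" "z = (s, t)"
    unfolding HAs_const_def by (auto elim!: sum.not_neutral_contains_not_neutral)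
  then show "even (pair_deg x + pair_deg y + pair_deg z)"
    unfolding xyz pair_deg_def fst_conv snd_conv
    by - (simp only: mult_eq_0_iff de_Morgan_disj, elim conjE, (drule nonzero_even)+, simp only: parity_simps, argo)
qed

lemma T_const_twisted_tensor:
  "T_const deg m mu = twisted_tensor (HA_const deg m mu) (HAs_const deg m mu) (graded_flip pair_deg pair_deg)"
proof (intro ext, clarify)
  fix a b c d s t
  show "T_const deg m mu (a, b) (c, d) (s, t) =
      twisted_tensor (HA_const deg m mu) (HAs_const deg m mu) (graded_flip pair_deg pair_deg) (a, b) (c, d) (s, t)"
    unfolding T_const_def twisted_tensor_def graded_flip_def pair_deg_def prod.case by (simp add: kron_simps)
qed

lemma T_mult_assoc:
  "sc_mult (T_const deg m mu) (sc_mult (T_const deg m mu) x y) z =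
   sc_mult (T_const deg m mu) x (sc_mult (T_const deg m mu) y z)"
proof (rule sc_mult_assoc)
  have "sc_associative (HA_const deg m mu)" "sc_associative (HAs_const deg m mu)"
    by (simp_all only: HA_const_twisted_tensor HAs_const_twisted_tensor sc_associative_twisted_tensor
        sc_associative_alg_mult sc_associative_dual_mult twisting_map_HA_twist twisting_map_HAs_twist)
  then show "sc_associative (T_const deg m mu)"
    by (simp only: T_const_twisted_tensor sc_associative_twisted_tensor twisting_map_graded_flip
        even_sc_HA_const even_sc_HAs_const)
qed

abbreviation "HA \<equiv> HA_const deg m mu"
abbreviation "HAs \<equiv> HAs_const deg m mu"
abbreviation "HT \<equiv> T_const deg m mu"

text \<open>Basis elements of the Heisenberg doubles: 1 \<otimes> e_\<beta> and e^\<beta> \<otimes> 1 in H(A), \<tilde>e_\<gamma> \<otimes> 1 and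
  1 \<otimes> \<tilde>e^\<gamma> in H(A*); the unit of A is u and that of A* is eps.\<close>

lemma HA_mult_basis:
  "sc_mult HA (pure_tensor eps (basis_vec \<beta>)) (pure_tensor eps (basis_vec \<beta>')) = pure_tensor eps (alg_mult \<beta> \<beta>')"
  "sc_mult HA (pure_tensor (basis_vec \<beta>) u) (pure_tensor (basis_vec \<beta>') u) = pure_tensor (dual_mult \<beta> \<beta>') u"
  "sc_mult HA (pure_tensor (basis_vec \<beta>) u) (pure_tensor eps (basis_vec \<beta>')) = pure_tensor (basis_vec \<beta>) (basis_vec \<beta>')"
  "sc_mult HA (pure_tensor eps (basis_vec \<beta>)) (pure_tensor (basis_vec \<beta>') u) = (\<lambda>(s, t). HA_twist \<beta> \<beta>' s t)"
  unfolding HA_const_twisted_tensor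
    twisted_tensor_mult_unit_right[OF sc_unit_dual_mult HA_twist_unit_right]
    twisted_tensor_mult_unit_left[OF sc_unit_alg_mult HA_twist_unit_left]
    twisted_tensor_mult_cross[OF sc_unit_dual_mult sc_unit_alg_mult]
  by (simp_all add: sc_mult_basis_vec sc_mult_unit_right[OF sc_unit_dual_mult])
    (simp add: basis_vec_def kron_simps)

lemma HAs_mult_basis:
  "sc_mult HAs (pure_tensor (basis_vec \<gamma>) eps) (pure_tensor (basis_vec \<gamma>') eps) = pure_tensor (alg_mult \<gamma> \<gamma>') eps"
  "sc_mult HAs (pure_tensor u (basis_vec \<gamma>)) (pure_tensor u (basis_vec \<gamma>')) = pure_tensor u (dual_mult \<gamma> \<gamma>')"
  "sc_mult HAs (pure_tensor (basis_vec \<gamma>) eps) (pure_tensor u (basis_vec \<gamma>')) = pure_tensor (basis_vec \<gamma>) (basis_vec \<gamma>')"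
  "sc_mult HAs (pure_tensor u (basis_vec \<gamma>)) (pure_tensor (basis_vec \<gamma>') eps) = (\<lambda>(s, t). HAs_twist \<gamma> \<gamma>' s t)"
  unfolding HAs_const_twisted_tensor
    twisted_tensor_mult_unit_right[OF sc_unit_alg_mult HAs_twist_unit_right]
    twisted_tensor_mult_unit_left[OF sc_unit_dual_mult HAs_twist_unit_left]
    twisted_tensor_mult_cross[OF sc_unit_alg_mult sc_unit_dual_mult]
  by (simp_all add: sc_mult_basis_vec sc_mult_unit_right[OF sc_unit_alg_mult])
    (simp add: basis_vec_def kron_simps)

lemma homogeneous_basis:
  "homogeneous pair_deg (deg \<beta>) (pure_tensor eps (basis_vec \<beta>))"
  "homogeneous pair_deg (deg \<beta>) (pure_tensor (basis_vec \<beta>) u)"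
  "homogeneous pair_deg (deg \<beta>) (pure_tensor (basis_vec \<beta>) eps)"
  "homogeneous pair_deg (deg \<beta>) (pure_tensor u (basis_vec \<beta>))"
  by (auto simp: homogeneous_def pure_tensor_def pair_deg_def basis_vec_def kron_def dest: eps_even u_even)

lemma HT_mult_sums:
  fixes f g :: "'i \<Rightarrow> 'i \<Rightarrow> complex"
  assumes "\<And>j. homogeneous pair_deg (dQ j) (Q j)" and "\<And>i. homogeneous pair_deg (dP i) (P' i)"
  shows "sc_mult HT (\<lambda>z. \<Sum>i\<in>UNIV. \<Sum>j\<in>UNIV. f i j * pure_tensor (P i) (Q j) z)
      (\<lambda>z. \<Sum>i'\<in>UNIV. \<Sum>j'\<in>UNIV. g i' j' * pure_tensor (P' i') (Q' j') z) =
    (\<lambda>z. \<Sum>i\<in>UNIV. \<Sum>j\<in>UNIV. f i j * (\<Sum>i'\<in>UNIV. \<Sum>j'\<in>UNIV. g i' j' *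
       (sgn (dQ j * dP i') * pure_tensor (sc_mult HA (P i) (P' i')) (sc_mult HAs (Q j) (Q' j')) z)))"
  unfolding sc_mult_sum2_left sc_mult_sum2_right T_const_twisted_tensor graded_tensor_mult_pure[OF assms] ..

end

section \<open>The map \<eta> on generators\<close>

locale drinfeld_heisenberg_map = graded_hopf_algebra +
  fixes a a' b b' :: nat
  assumes parity_a: "odd (a + a')" and parity_b: "even (b + b')"
begin

abbreviation "etaL \<equiv> eta_L deg mu eps a b"
abbreviation "etaR \<equiv> eta_R deg m u a' b'"

lemma etaL_pure_tensors: "etaL \<alpha> = (\<lambda>z. \<Sum>\<beta>\<in>UNIV. \<Sum>\<gamma>\<in>UNIV. (sgn (a * deg \<beta> + b * deg \<gamma>) * mu \<alpha> \<beta> \<gamma>) *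
    pure_tensor (pure_tensor eps (basis_vec \<beta>)) (pure_tensor (basis_vec \<gamma>) eps) z)"
  unfolding eta_L_def pure_tensor_def basis_vec_def by (intro ext) (auto simp: mult_ac)

lemma etaR_pure_tensors: "etaR \<alpha> = (\<lambda>z. \<Sum>\<beta>\<in>UNIV. \<Sum>\<gamma>\<in>UNIV. (sgn (a' * deg \<beta> + b' * deg \<gamma>) * m \<alpha> \<gamma> \<beta>) *
    pure_tensor (pure_tensor (basis_vec \<beta>) u) (pure_tensor u (basis_vec \<gamma>)) z)"
  unfolding eta_R_def pure_tensor_def basis_vec_def by (intro ext) (auto simp: mult_ac)

lemma etaL_mult: "sc_mult HT (etaL \<alpha>1) (etaL \<alpha>2) = (\<lambda>z. \<Sum>g\<in>UNIV. m g \<alpha>1 \<alpha>2 * etaL g z)"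
proof (intro ext, clarify)
  fix s t k l
  have "sc_mult HT (etaL \<alpha>1) (etaL \<alpha>2) ((s, t), (k, l)) = (\<Sum>be\<in>UNIV. \<Sum>ga\<in>UNIV. \<Sum>be'\<in>UNIV. \<Sum>ga'\<in>UNIV.
     sgn (a * deg be + b * deg ga) * mu \<alpha>1 be ga * (sgn (a * deg be' + b * deg ga') * mu \<alpha>2 be' ga' *
       (sgn (deg ga * deg be') * (eps s * m t be be' * (m k ga ga' * eps l)))))"
    unfolding etaL_pure_tensors[of \<alpha>1] etaL_pure_tensors[of \<alpha>2]
      HT_mult_sums[OF homogeneous_basis(3) homogeneous_basis(1)] HA_mult_basis HAs_mult_basis
    by (simp add: pure_tensor_def alg_mult_def sum_distrib_left mult_ac)
  also have "\<dots> = (\<Sum>r1\<in>UNIV. \<Sum>s1\<in>UNIV. \<Sum>r2\<in>UNIV. \<Sum>s2\<in>UNIV.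
     eps s * eps l * sgn (a * deg t + b * deg k) * (sgn (deg s1 * deg r2) * mu \<alpha>1 r1 s1 * mu \<alpha>2 r2 s2 * m t r1 r2 * m k s1 s2))"
    by ((simp only: sum_distrib_left sum_distrib_right)?, simp only: sum_product_UNIV,
        rule sum_UNIV_reindex_cong[of "\<lambda>(r1, s1, r2, s2). (r1, s1, r2, s2)"
          "\<lambda>(r1, s1, r2, s2). (r1, s1, r2, s2)"], simp_all only: split_paired_all prod.case,
        rule sgn_0_cancel, simp only: sign_normalize, rule sgn_mult_cong, simp add: mult_ac,
        (simp only: nonzero_factors)?, ((drule nonzero_even)+, simp only: parity_simps, argo?)?)
  also have "\<dots> = eps s * eps l * sgn (a * deg t + b * deg k) * (\<Sum>g\<in>UNIV. m g \<alpha>1 \<alpha>2 * mu g t k)"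
    by (simp only: comult_mult sum_distrib_left)
  also have "\<dots> = (\<Sum>g\<in>UNIV. m g \<alpha>1 \<alpha>2 * etaL g ((s, t), (k, l)))"
    unfolding eta_L_def by (simp add: kron_simps sum_distrib_left mult_ac)
  finally show "sc_mult HT (etaL \<alpha>1) (etaL \<alpha>2) ((s, t), (k, l)) = (\<Sum>g\<in>UNIV. m g \<alpha>1 \<alpha>2 * etaL g ((s, t), (k, l)))" .
qed

lemma etaR_mult: "sc_mult HT (etaR \<beta>1) (etaR \<beta>2) = (\<lambda>z. \<Sum>g\<in>UNIV. sgn (deg \<beta>1 * deg \<beta>2) * mu g \<beta>1 \<beta>2 * etaR g z)"
proof (intro ext, clarify)
  fix s t k l
  have "sc_mult HT (etaR \<beta>1) (etaR \<beta>2) ((s, t), (k, l)) = (\<Sum>be\<in>UNIV. \<Sum>ga\<in>UNIV. \<Sum>be'\<in>UNIV. \<Sum>ga'\<in>UNIV.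
     sgn (a' * deg be + b' * deg ga) * m \<beta>1 ga be * (sgn (a' * deg be' + b' * deg ga') * m \<beta>2 ga' be' *
       (sgn (deg ga * deg be') * (sgn (deg be * deg be') * mu s be be' * u t * (sgn (deg ga * deg ga') * mu l ga ga' * u k)))))"
    unfolding etaR_pure_tensors[of \<beta>1] etaR_pure_tensors[of \<beta>2]
      HT_mult_sums[OF homogeneous_basis(4) homogeneous_basis(2)] HA_mult_basis HAs_mult_basis
    by (simp add: pure_tensor_def dual_mult_def sum_distrib_left mult_ac)
  also have "\<dots> = (\<Sum>r1\<in>UNIV. \<Sum>s1\<in>UNIV. \<Sum>r2\<in>UNIV. \<Sum>s2\<in>UNIV.
     u t * u k * sgn (deg \<beta>1 * deg \<beta>2 + a' * deg s + b' * deg l) * (sgn (deg s1 * deg r2) * mu l r1 s1 * mu s r2 s2 * m \<beta>1 r1 r2 * m \<beta>2 s1 s2))"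
    by ((simp only: sum_distrib_left sum_distrib_right)?, simp only: sum_product_UNIV,
        rule sum_UNIV_reindex_cong[of "\<lambda>(r1, s1, r2, s2). (r2, r1, s2, s1)"
          "\<lambda>(r2, r1, s2, s1). (r1, s1, r2, s2)"], simp_all only: split_paired_all prod.case,
        rule sgn_0_cancel, simp only: sign_normalize, rule sgn_mult_cong, simp add: mult_ac,
        (simp only: nonzero_factors)?, ((drule nonzero_even)+, simp only: parity_simps, argo?)?)
  also have "\<dots> = u t * u k * sgn (deg \<beta>1 * deg \<beta>2 + a' * deg s + b' * deg l) * (\<Sum>g\<in>UNIV. m g l s * mu g \<beta>1 \<beta>2)"
    by (simp only: comult_mult sum_distrib_left)
  also have "\<dots> = (\<Sum>g\<in>UNIV. sgn (deg \<beta>1 * deg \<beta>2) * mu g \<beta>1 \<beta>2 * etaR g ((s, t), (k, l)))"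
    unfolding eta_R_def by (simp add: kron_simps sum_distrib_left sgn_add mult_ac)
  finally show "sc_mult HT (etaR \<beta>1) (etaR \<beta>2) ((s, t), (k, l)) =
      (\<Sum>g\<in>UNIV. sgn (deg \<beta>1 * deg \<beta>2) * mu g \<beta>1 \<beta>2 * etaR g ((s, t), (k, l)))" .
qed

definition cross_coeff where
  "cross_coeff \<beta> \<gamma> x y z w = (\<Sum>g\<in>UNIV. \<Sum>g'\<in>UNIV. \<Sum>e\<in>UNIV.
     sgn (a' * deg x + b' * deg g + a * deg y + b * deg g' + deg g * deg y + deg z * deg w + deg z * deg e) *
     m \<beta> g x * mu \<gamma> y g' * mu g' z e * m g e w)"

lemma etaR_etaL_apply: "sc_mult HT (etaR \<beta>) (etaL \<gamma>) ((x, y), (z, w)) = cross_coeff \<beta> \<gamma> x y z w"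
proof -
  have "sc_mult HT (etaR \<beta>) (etaL \<gamma>) ((x, y), (z, w)) = (\<Sum>g\<in>UNIV. \<Sum>g'\<in>UNIV. \<Sum>e\<in>UNIV.
      sgn (a' * deg x + b' * deg g) * m \<beta> g x * (sgn (a * deg y + b * deg g') * mu \<gamma> y g' *
       (sgn (deg g * deg y) * (sgn (deg z * deg w + deg z * deg e) * mu g' z e * m g e w))))"
    unfolding etaR_pure_tensors[of \<beta>] etaL_pure_tensors[of \<gamma>]
      HT_mult_sums[OF homogeneous_basis(4) homogeneous_basis(1)] HA_mult_basis HAs_mult_basis
    by (simp add: pure_tensor_def basis_vec_def HAs_twist_def kron_simps sum_distrib_left)
  also have "\<dots> = cross_coeff \<beta> \<gamma> x y z w"
    unfolding cross_coeff_def
    by ((simp only: sum_distrib_left sum_distrib_right)?, simp only: sum_product_UNIV,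
        rule sum_UNIV_reindex_cong[of "\<lambda>(g, g', e). (g, g', e)" "\<lambda>(g, g', e). (g, g', e)"], simp_all only: split_paired_all prod.case,
        rule sgn_0_cancel, simp only: sign_normalize, rule sgn_mult_cong, simp add: mult_ac,
        (simp only: nonzero_factors)?, ((drule nonzero_even)+, simp only: parity_simps, argo?)?)
  finally show ?thesis .
qed

lemma etaL_etaR_apply: "sc_mult HT (etaL \<alpha>) (etaR \<beta>) ((x, y), (z, w)) =
  (\<Sum>bb\<in>UNIV. \<Sum>bq\<in>UNIV. sgn (a * deg bb + b * deg z + a' * deg bq + b' * deg w + deg z * deg bq) *
   mu \<alpha> bb z * m \<beta> w bq * HA_twist bb bq x y)"
proof -
  have "sc_mult HT (etaL \<alpha>) (etaR \<beta>) ((x, y), (z, w)) = (\<Sum>bb\<in>UNIV. \<Sum>bq\<in>UNIV.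
      sgn (a * deg bb + b * deg z) * mu \<alpha> bb z * (sgn (a' * deg bq + b' * deg w) * m \<beta> w bq *
       (sgn (deg z * deg bq) * HA_twist bb bq x y)))"
    unfolding etaL_pure_tensors[of \<alpha>] etaR_pure_tensors[of \<beta>]
      HT_mult_sums[OF homogeneous_basis(3) homogeneous_basis(2)] HA_mult_basis HAs_mult_basis
    by (simp add: pure_tensor_def basis_vec_def kron_simps sum_distrib_left)
  then show ?thesis
    by (simp add: sgn_add mult_ac)
qed

lemma D_cross_etaL_etaR_comult:
  "(\<Sum>s\<in>UNIV. \<Sum>t\<in>UNIV. D_cross deg m mu Sinv \<beta> \<gamma> s t
    * sc_mult HT (etaL s) (etaR t) ((x, y), (z, w))) =
    (\<Sum>mm\<in>UNIV. \<Sum>nu\<in>UNIV. \<Sum>de\<in>UNIV. \<Sum>ep\<in>UNIV. \<Sum>bq\<in>UNIV.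
    \<Sum>t\<in>UNIV. \<Sum>e\<in>UNIV. \<Sum>c1\<in>UNIV. \<Sum>c2\<in>UNIV.
    sgn (deg mm * (deg e + deg y + deg z + deg de) + a * (deg e + deg y) + b * deg z + a' * deg bq
    + b' * deg w + deg z * deg bq + (deg e + deg y) * deg bq + deg x * deg e + deg e) * m mm nu t
    * m \<beta> mm de * Sinv ep de * m t w bq * m bq x e * mu c1 z nu * mu c2 y c1
    * (\<Sum>j\<in>UNIV. mu \<gamma> j c2 * mu j ep e))"
proof -
  have "(\<Sum>s\<in>UNIV. \<Sum>t\<in>UNIV. D_cross deg m mu Sinv \<beta> \<gamma> s t
      * sc_mult HT (etaL s) (etaR t) ((x, y), (z, w))) =
      (\<Sum>mm\<in>UNIV. \<Sum>nu\<in>UNIV. \<Sum>de\<in>UNIV. \<Sum>ep\<in>UNIV. \<Sum>rho\<in>UNIV.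
      \<Sum>bb\<in>UNIV. \<Sum>bq\<in>UNIV. \<Sum>t\<in>UNIV. \<Sum>e\<in>UNIV.
      sgn (deg mm * (deg bb + deg z + deg de) + a * deg bb + b * deg z + a' * deg bq + b' * deg w
      + deg z * deg bq + deg bb * deg bq + deg x * deg e + deg e) * m mm nu t * m \<beta> mm de
      * mu \<gamma> ep rho * Sinv ep de * m t w bq * m bq x e * mu bb e y
      * (\<Sum>s\<in>UNIV. mu rho s nu * mu s bb z))"
    unfolding etaL_etaR_apply D_cross_def HA_twist_def prod.case
    by ((simp only: sum_distrib_left sum_distrib_right)?, simp only: sum_product_UNIV,
        rule sum_UNIV_reindex_cong[of "\<lambda>(mm, nu, de, ep, rho, bb, bq, t, e, s). (s, t, bb, bq, e, mm, nu, de, ep, rho)"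
          "\<lambda>(s, t, bb, bq, e, mm, nu, de, ep, rho). (mm, nu, de, ep, rho, bb, bq, t, e, s)"], simp_all only: split_paired_all prod.case,
        rule sgn_0_cancel, simp only: sign_normalize, rule sgn_mult_cong, simp add: mult_ac,
        insert parity_a parity_b, (simp only: nonzero_factors)?, ((drule nonzero_even)+, simp only: parity_simps, argo?)?)
  also have "\<dots> = (\<Sum>mm\<in>UNIV. \<Sum>nu\<in>UNIV. \<Sum>de\<in>UNIV. \<Sum>ep\<in>UNIV. \<Sum>rho\<in>UNIV.
      \<Sum>bb\<in>UNIV. \<Sum>bq\<in>UNIV. \<Sum>t\<in>UNIV. \<Sum>e\<in>UNIV.
      sgn (deg mm * (deg bb + deg z + deg de) + a * deg bb + b * deg z + a' * deg bq + b' * deg w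
      + deg z * deg bq + deg bb * deg bq + deg x * deg e + deg e) * m mm nu t * m \<beta> mm de
      * mu \<gamma> ep rho * Sinv ep de * m t w bq * m bq x e * mu bb e y
      * (\<Sum>c1\<in>UNIV. mu rho bb c1 * mu c1 z nu))"
    by (simp only: coassoc)
  also have "\<dots> = (\<Sum>mm\<in>UNIV. \<Sum>nu\<in>UNIV. \<Sum>de\<in>UNIV. \<Sum>ep\<in>UNIV. \<Sum>rho\<in>UNIV.
      \<Sum>bq\<in>UNIV. \<Sum>t\<in>UNIV. \<Sum>e\<in>UNIV. \<Sum>c1\<in>UNIV.
      sgn (deg mm * (deg e + deg y + deg z + deg de) + a * (deg e + deg y) + b * deg z + a' * deg bq
      + b' * deg w + deg z * deg bq + (deg e + deg y) * deg bq + deg x * deg e + deg e) * m mm nu t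
      * m \<beta> mm de * mu \<gamma> ep rho * Sinv ep de * m t w bq * m bq x e * mu c1 z nu
      * (\<Sum>bb\<in>UNIV. mu rho bb c1 * mu bb e y))"
    by ((simp only: sum_distrib_left sum_distrib_right)?, simp only: sum_product_UNIV,
        rule sum_UNIV_reindex_cong[of "\<lambda>(mm, nu, de, ep, rho, bq, t, e, c1, bb). (mm, nu, de, ep, rho, bb, bq, t, e, c1)"
          "\<lambda>(mm, nu, de, ep, rho, bb, bq, t, e, c1). (mm, nu, de, ep, rho, bq, t, e, c1, bb)"], simp_all only: split_paired_all prod.case,
        rule sgn_0_cancel, simp only: sign_normalize, rule sgn_mult_cong, simp add: mult_ac,
        insert parity_a parity_b, (simp only: nonzero_factors)?, ((drule nonzero_even)+, simp only: parity_simps, argo?)?)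
  also have "\<dots> = (\<Sum>mm\<in>UNIV. \<Sum>nu\<in>UNIV. \<Sum>de\<in>UNIV. \<Sum>ep\<in>UNIV. \<Sum>rho\<in>UNIV.
      \<Sum>bq\<in>UNIV. \<Sum>t\<in>UNIV. \<Sum>e\<in>UNIV. \<Sum>c1\<in>UNIV.
      sgn (deg mm * (deg e + deg y + deg z + deg de) + a * (deg e + deg y) + b * deg z + a' * deg bq
      + b' * deg w + deg z * deg bq + (deg e + deg y) * deg bq + deg x * deg e + deg e) * m mm nu t
      * m \<beta> mm de * mu \<gamma> ep rho * Sinv ep de * m t w bq * m bq x e * mu c1 z nu
      * (\<Sum>c2\<in>UNIV. mu rho e c2 * mu c2 y c1))"
    by (simp only: coassoc)
  also have "\<dots> = (\<Sum>mm\<in>UNIV. \<Sum>nu\<in>UNIV. \<Sum>de\<in>UNIV. \<Sum>ep\<in>UNIV. \<Sum>bq\<in>UNIV.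
      \<Sum>t\<in>UNIV. \<Sum>e\<in>UNIV. \<Sum>c1\<in>UNIV. \<Sum>c2\<in>UNIV.
      sgn (deg mm * (deg e + deg y + deg z + deg de) + a * (deg e + deg y) + b * deg z + a' * deg bq
      + b' * deg w + deg z * deg bq + (deg e + deg y) * deg bq + deg x * deg e + deg e) * m mm nu t
      * m \<beta> mm de * Sinv ep de * m t w bq * m bq x e * mu c1 z nu * mu c2 y c1
      * (\<Sum>rho\<in>UNIV. mu \<gamma> ep rho * mu rho e c2))"
    by ((simp only: sum_distrib_left sum_distrib_right)?, simp only: sum_product_UNIV,
        rule sum_UNIV_reindex_cong[of "\<lambda>(mm, nu, de, ep, bq, t, e, c1, c2, rho). (mm, nu, de, ep, rho, bq, t, e, c1, c2)"
          "\<lambda>(mm, nu, de, ep, rho, bq, t, e, c1, c2). (mm, nu, de, ep, bq, t, e, c1, c2, rho)"], simp_all only: split_paired_all prod.case,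
        rule sgn_0_cancel, simp only: sign_normalize, rule sgn_mult_cong, simp add: mult_ac,
        insert parity_a parity_b, (simp only: nonzero_factors)?, ((drule nonzero_even)+, simp only: parity_simps, argo?)?)
  also have "\<dots> = (\<Sum>mm\<in>UNIV. \<Sum>nu\<in>UNIV. \<Sum>de\<in>UNIV. \<Sum>ep\<in>UNIV. \<Sum>bq\<in>UNIV.
      \<Sum>t\<in>UNIV. \<Sum>e\<in>UNIV. \<Sum>c1\<in>UNIV. \<Sum>c2\<in>UNIV.
      sgn (deg mm * (deg e + deg y + deg z + deg de) + a * (deg e + deg y) + b * deg z + a' * deg bq
      + b' * deg w + deg z * deg bq + (deg e + deg y) * deg bq + deg x * deg e + deg e) * m mm nu t
      * m \<beta> mm de * Sinv ep de * m t w bq * m bq x e * mu c1 z nu * mu c2 y c1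
      * (\<Sum>j\<in>UNIV. mu \<gamma> j c2 * mu j ep e))"
    by (simp only: coassoc[symmetric])
  finally show ?thesis .
qed

lemma D_cross_etaL_etaR_mult:
  "(\<Sum>mm\<in>UNIV. \<Sum>nu\<in>UNIV. \<Sum>de\<in>UNIV. \<Sum>ep\<in>UNIV. \<Sum>bq\<in>UNIV.
    \<Sum>t\<in>UNIV. \<Sum>e\<in>UNIV. \<Sum>c1\<in>UNIV. \<Sum>c2\<in>UNIV.
    sgn (deg mm * (deg e + deg y + deg z + deg de) + a * (deg e + deg y) + b * deg z + a' * deg bq
    + b' * deg w + deg z * deg bq + (deg e + deg y) * deg bq + deg x * deg e + deg e) * m mm nu t
    * m \<beta> mm de * Sinv ep de * m t w bq * m bq x e * mu c1 z nu * mu c2 y c1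
    * (\<Sum>j\<in>UNIV. mu \<gamma> j c2 * mu j ep e)) =
    (\<Sum>nu\<in>UNIV. \<Sum>de\<in>UNIV. \<Sum>ep\<in>UNIV. \<Sum>e\<in>UNIV. \<Sum>c1\<in>UNIV.
    \<Sum>c2\<in>UNIV. \<Sum>j\<in>UNIV. \<Sum>d1\<in>UNIV. \<Sum>d2\<in>UNIV.
    sgn ((deg d2 + deg e) * (deg e + deg y + deg z + deg de) + a * (deg e + deg y) + b * deg z
    + a' * (deg x + deg e) + b' * deg w + deg z * (deg x + deg e)
    + (deg e + deg y) * (deg x + deg e) + deg x * deg e + deg e) * Sinv ep de * mu c1 z nu
    * mu c2 y c1 * mu \<gamma> j c2 * mu j ep e * m d1 nu w * m d2 d1 x
    * (\<Sum>q\<in>UNIV. m q e de * m \<beta> d2 q))"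
proof -
  have "(\<Sum>mm\<in>UNIV. \<Sum>nu\<in>UNIV. \<Sum>de\<in>UNIV. \<Sum>ep\<in>UNIV. \<Sum>bq\<in>UNIV.
      \<Sum>t\<in>UNIV. \<Sum>e\<in>UNIV. \<Sum>c1\<in>UNIV. \<Sum>c2\<in>UNIV.
      sgn (deg mm * (deg e + deg y + deg z + deg de) + a * (deg e + deg y) + b * deg z + a' * deg bq
      + b' * deg w + deg z * deg bq + (deg e + deg y) * deg bq + deg x * deg e + deg e) * m mm nu t
      * m \<beta> mm de * Sinv ep de * m t w bq * m bq x e * mu c1 z nu * mu c2 y c1
      * (\<Sum>j\<in>UNIV. mu \<gamma> j c2 * mu j ep e)) =
      (\<Sum>mm\<in>UNIV. \<Sum>nu\<in>UNIV. \<Sum>de\<in>UNIV. \<Sum>ep\<in>UNIV. \<Sum>bq\<in>UNIV.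
      \<Sum>e\<in>UNIV. \<Sum>c1\<in>UNIV. \<Sum>c2\<in>UNIV. \<Sum>j\<in>UNIV.
      sgn (deg mm * (deg e + deg y + deg z + deg de) + a * (deg e + deg y) + b * deg z + a' * deg bq
      + b' * deg w + deg z * deg bq + (deg e + deg y) * deg bq + deg x * deg e + deg e) * m \<beta> mm de
      * Sinv ep de * m bq x e * mu c1 z nu * mu c2 y c1 * mu \<gamma> j c2 * mu j ep e
      * (\<Sum>t\<in>UNIV. m t w bq * m mm nu t))"
    by ((simp only: sum_distrib_left sum_distrib_right)?, simp only: sum_product_UNIV,
        rule sum_UNIV_reindex_cong[of "\<lambda>(mm, nu, de, ep, bq, e, c1, c2, j, t). (mm, nu, de, ep, bq, t, e, c1, c2, j)"
          "\<lambda>(mm, nu, de, ep, bq, t, e, c1, c2, j). (mm, nu, de, ep, bq, e, c1, c2, j, t)"], simp_all only: split_paired_all prod.case,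
        rule sgn_0_cancel, simp only: sign_normalize, rule sgn_mult_cong, simp add: mult_ac,
        insert parity_a parity_b, (simp only: nonzero_factors)?, ((drule nonzero_even)+, simp only: parity_simps, argo?)?)
  also have "\<dots> = (\<Sum>mm\<in>UNIV. \<Sum>nu\<in>UNIV. \<Sum>de\<in>UNIV. \<Sum>ep\<in>UNIV. \<Sum>bq\<in>UNIV.
      \<Sum>e\<in>UNIV. \<Sum>c1\<in>UNIV. \<Sum>c2\<in>UNIV. \<Sum>j\<in>UNIV.
      sgn (deg mm * (deg e + deg y + deg z + deg de) + a * (deg e + deg y) + b * deg z + a' * deg bq
      + b' * deg w + deg z * deg bq + (deg e + deg y) * deg bq + deg x * deg e + deg e) * m \<beta> mm de
      * Sinv ep de * m bq x e * mu c1 z nu * mu c2 y c1 * mu \<gamma> j c2 * mu j ep e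
      * (\<Sum>d1\<in>UNIV. m d1 nu w * m mm d1 bq))"
    by (simp only: m_assoc[symmetric])
  also have "\<dots> = (\<Sum>mm\<in>UNIV. \<Sum>nu\<in>UNIV. \<Sum>de\<in>UNIV. \<Sum>ep\<in>UNIV. \<Sum>e\<in>UNIV.
      \<Sum>c1\<in>UNIV. \<Sum>c2\<in>UNIV. \<Sum>j\<in>UNIV. \<Sum>d1\<in>UNIV.
      sgn (deg mm * (deg e + deg y + deg z + deg de) + a * (deg e + deg y) + b * deg z
      + a' * (deg x + deg e) + b' * deg w + deg z * (deg x + deg e)
      + (deg e + deg y) * (deg x + deg e) + deg x * deg e + deg e) * m \<beta> mm de * Sinv ep de
      * mu c1 z nu * mu c2 y c1 * mu \<gamma> j c2 * mu j ep e * m d1 nu w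
      * (\<Sum>bq\<in>UNIV. m bq x e * m mm d1 bq))"
    by ((simp only: sum_distrib_left sum_distrib_right)?, simp only: sum_product_UNIV,
        rule sum_UNIV_reindex_cong[of "\<lambda>(mm, nu, de, ep, e, c1, c2, j, d1, bq). (mm, nu, de, ep, bq, e, c1, c2, j, d1)"
          "\<lambda>(mm, nu, de, ep, bq, e, c1, c2, j, d1). (mm, nu, de, ep, e, c1, c2, j, d1, bq)"], simp_all only: split_paired_all prod.case,
        rule sgn_0_cancel, simp only: sign_normalize, rule sgn_mult_cong, simp add: mult_ac,
        insert parity_a parity_b, (simp only: nonzero_factors)?, ((drule nonzero_even)+, simp only: parity_simps, argo?)?)
  also have "\<dots> = (\<Sum>mm\<in>UNIV. \<Sum>nu\<in>UNIV. \<Sum>de\<in>UNIV. \<Sum>ep\<in>UNIV. \<Sum>e\<in>UNIV.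
      \<Sum>c1\<in>UNIV. \<Sum>c2\<in>UNIV. \<Sum>j\<in>UNIV. \<Sum>d1\<in>UNIV.
      sgn (deg mm * (deg e + deg y + deg z + deg de) + a * (deg e + deg y) + b * deg z
      + a' * (deg x + deg e) + b' * deg w + deg z * (deg x + deg e)
      + (deg e + deg y) * (deg x + deg e) + deg x * deg e + deg e) * m \<beta> mm de * Sinv ep de
      * mu c1 z nu * mu c2 y c1 * mu \<gamma> j c2 * mu j ep e * m d1 nu w
      * (\<Sum>d2\<in>UNIV. m d2 d1 x * m mm d2 e))"
    by (simp only: m_assoc[symmetric])
  also have "\<dots> = (\<Sum>nu\<in>UNIV. \<Sum>de\<in>UNIV. \<Sum>ep\<in>UNIV. \<Sum>e\<in>UNIV. \<Sum>c1\<in>UNIV.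
      \<Sum>c2\<in>UNIV. \<Sum>j\<in>UNIV. \<Sum>d1\<in>UNIV. \<Sum>d2\<in>UNIV.
      sgn ((deg d2 + deg e) * (deg e + deg y + deg z + deg de) + a * (deg e + deg y) + b * deg z
      + a' * (deg x + deg e) + b' * deg w + deg z * (deg x + deg e)
      + (deg e + deg y) * (deg x + deg e) + deg x * deg e + deg e) * Sinv ep de * mu c1 z nu
      * mu c2 y c1 * mu \<gamma> j c2 * mu j ep e * m d1 nu w * m d2 d1 x
      * (\<Sum>mm\<in>UNIV. m mm d2 e * m \<beta> mm de))"
    by ((simp only: sum_distrib_left sum_distrib_right)?, simp only: sum_product_UNIV,
        rule sum_UNIV_reindex_cong[of "\<lambda>(nu, de, ep, e, c1, c2, j, d1, d2, mm). (mm, nu, de, ep, e, c1, c2, j, d1, d2)"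
          "\<lambda>(mm, nu, de, ep, e, c1, c2, j, d1, d2). (nu, de, ep, e, c1, c2, j, d1, d2, mm)"], simp_all only: split_paired_all prod.case,
        rule sgn_0_cancel, simp only: sign_normalize, rule sgn_mult_cong, simp add: mult_ac,
        insert parity_a parity_b, (simp only: nonzero_factors)?, ((drule nonzero_even)+, simp only: parity_simps, argo?)?)
  also have "\<dots> = (\<Sum>nu\<in>UNIV. \<Sum>de\<in>UNIV. \<Sum>ep\<in>UNIV. \<Sum>e\<in>UNIV. \<Sum>c1\<in>UNIV.
      \<Sum>c2\<in>UNIV. \<Sum>j\<in>UNIV. \<Sum>d1\<in>UNIV. \<Sum>d2\<in>UNIV.
      sgn ((deg d2 + deg e) * (deg e + deg y + deg z + deg de) + a * (deg e + deg y) + b * deg z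
      + a' * (deg x + deg e) + b' * deg w + deg z * (deg x + deg e)
      + (deg e + deg y) * (deg x + deg e) + deg x * deg e + deg e) * Sinv ep de * mu c1 z nu
      * mu c2 y c1 * mu \<gamma> j c2 * mu j ep e * m d1 nu w * m d2 d1 x
      * (\<Sum>q\<in>UNIV. m q e de * m \<beta> d2 q))"
    by (simp only: m_assoc)
  finally show ?thesis .
qed

lemma D_cross_etaL_etaR_antipode:
  "(\<Sum>nu\<in>UNIV. \<Sum>de\<in>UNIV. \<Sum>ep\<in>UNIV. \<Sum>e\<in>UNIV. \<Sum>c1\<in>UNIV.
    \<Sum>c2\<in>UNIV. \<Sum>j\<in>UNIV. \<Sum>d1\<in>UNIV. \<Sum>d2\<in>UNIV.
    sgn ((deg d2 + deg e) * (deg e + deg y + deg z + deg de) + a * (deg e + deg y) + b * deg z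
    + a' * (deg x + deg e) + b' * deg w + deg z * (deg x + deg e)
    + (deg e + deg y) * (deg x + deg e) + deg x * deg e + deg e) * Sinv ep de * mu c1 z nu
    * mu c2 y c1 * mu \<gamma> j c2 * mu j ep e * m d1 nu w * m d2 d1 x
    * (\<Sum>q\<in>UNIV. m q e de * m \<beta> d2 q)) =
    cross_coeff \<beta> \<gamma> x y z w"
proof -
  have "(\<Sum>nu\<in>UNIV. \<Sum>de\<in>UNIV. \<Sum>ep\<in>UNIV. \<Sum>e\<in>UNIV. \<Sum>c1\<in>UNIV.
      \<Sum>c2\<in>UNIV. \<Sum>j\<in>UNIV. \<Sum>d1\<in>UNIV. \<Sum>d2\<in>UNIV.
      sgn ((deg d2 + deg e) * (deg e + deg y + deg z + deg de) + a * (deg e + deg y) + b * deg z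
      + a' * (deg x + deg e) + b' * deg w + deg z * (deg x + deg e)
      + (deg e + deg y) * (deg x + deg e) + deg x * deg e + deg e) * Sinv ep de * mu c1 z nu
      * mu c2 y c1 * mu \<gamma> j c2 * mu j ep e * m d1 nu w * m d2 d1 x
      * (\<Sum>q\<in>UNIV. m q e de * m \<beta> d2 q)) =
      (\<Sum>nu\<in>UNIV. \<Sum>c1\<in>UNIV. \<Sum>c2\<in>UNIV. \<Sum>j\<in>UNIV. \<Sum>d1\<in>UNIV.
      \<Sum>d2\<in>UNIV. \<Sum>q\<in>UNIV. sgn (deg d2 * deg j + deg d2 * deg y + deg d2 * deg z
      + a * deg y + b * deg z + a' * deg x + b' * deg w + deg z * deg x + deg y * deg x) * mu c1 z nu
      * mu c2 y c1 * mu \<gamma> j c2 * m d1 nu w * m d2 d1 x * m \<beta> d2 q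
      * (\<Sum>ep\<in>UNIV. \<Sum>e\<in>UNIV. \<Sum>de\<in>UNIV. sgn (deg ep * deg e) * mu j ep e * Sinv ep de * m q e de))"
    by ((simp only: sum_distrib_left sum_distrib_right)?, simp only: sum_product_UNIV,
        rule sum_UNIV_reindex_cong[of "\<lambda>(nu, c1, c2, j, d1, d2, q, ep, e, de). (nu, de, ep, e, c1, c2, j, d1, d2, q)"
          "\<lambda>(nu, de, ep, e, c1, c2, j, d1, d2, q). (nu, c1, c2, j, d1, d2, q, ep, e, de)"], simp_all only: split_paired_all prod.case,
        rule sgn_0_cancel, simp only: sign_normalize, rule sgn_mult_cong, simp add: mult_ac,
        insert parity_a parity_b, (simp only: nonzero_factors)?, ((drule nonzero_even)+, simp only: parity_simps, argo?)?)
  also have "\<dots> = (\<Sum>nu\<in>UNIV. \<Sum>c1\<in>UNIV. \<Sum>c2\<in>UNIV. \<Sum>j\<in>UNIV. \<Sum>d1\<in>UNIV.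
      \<Sum>d2\<in>UNIV. \<Sum>q\<in>UNIV. sgn (deg d2 * deg j + deg d2 * deg y + deg d2 * deg z
      + a * deg y + b * deg z + a' * deg x + b' * deg w + deg z * deg x + deg y * deg x) * mu c1 z nu
      * mu c2 y c1 * mu \<gamma> j c2 * m d1 nu w * m d2 d1 x * m \<beta> d2 q * (eps j * u q))"
    by (simp only: Sinv_twisted_antipode)
  also have "\<dots> = (\<Sum>nu\<in>UNIV. \<Sum>c1\<in>UNIV. \<Sum>c2\<in>UNIV. \<Sum>d1\<in>UNIV. \<Sum>d2\<in>UNIV.
      sgn (deg d2 * deg y + deg d2 * deg z + a * deg y + b * deg z + a' * deg x + b' * deg w
      + deg z * deg x + deg y * deg x) * mu c1 z nu * mu c2 y c1 * m d1 nu w * m d2 d1 x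
      * (\<Sum>j\<in>UNIV. eps j * mu \<gamma> j c2) * (\<Sum>q\<in>UNIV. u q * m \<beta> d2 q))"
    by ((simp only: sum_distrib_left sum_distrib_right)?, simp only: sum_product_UNIV,
        rule sum_UNIV_reindex_cong[of "\<lambda>(nu, c1, c2, d1, d2, q, j). (nu, c1, c2, j, d1, d2, q)"
          "\<lambda>(nu, c1, c2, j, d1, d2, q). (nu, c1, c2, d1, d2, q, j)"], simp_all only: split_paired_all prod.case,
        rule sgn_0_cancel, simp only: sign_normalize, rule sgn_mult_cong, simp add: mult_ac,
        insert parity_a parity_b, (simp only: nonzero_factors)?, ((drule nonzero_even)+, simp only: parity_simps, argo?)?)
  also have "\<dots> = (\<Sum>nu\<in>UNIV. \<Sum>c1\<in>UNIV. \<Sum>c2\<in>UNIV. \<Sum>d1\<in>UNIV. \<Sum>d2\<in>UNIV.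
      sgn (deg d2 * deg y + deg d2 * deg z + a * deg y + b * deg z + a' * deg x + b' * deg w
      + deg z * deg x + deg y * deg x) * mu c1 z nu * mu c2 y c1 * m d1 nu w * m d2 d1 x * kron \<gamma> c2
      * kron \<beta> d2)"
    by (simp only: counit_left unit_right)
  also have "\<dots> = (\<Sum>nu\<in>UNIV. \<Sum>c1\<in>UNIV. \<Sum>d1\<in>UNIV. sgn (deg \<beta> * deg y + deg \<beta> * deg z
      + a * deg y + b * deg z + a' * deg x + b' * deg w + deg z * deg x + deg y * deg x) * mu c1 z nu
      * mu \<gamma> y c1 * m d1 nu w * m \<beta> d1 x)"
    by (simp add: kron_simps)
  also have "\<dots> = cross_coeff \<beta> \<gamma> x y z w"
    unfolding cross_coeff_def
    by ((simp only: sum_distrib_left sum_distrib_right)?, simp only: sum_product_UNIV,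
        rule sum_UNIV_reindex_cong[of "\<lambda>(d1, c1, nu). (nu, c1, d1)"
          "\<lambda>(nu, c1, d1). (d1, c1, nu)"], simp_all only: split_paired_all prod.case,
        rule sgn_0_cancel, simp only: sign_normalize, rule sgn_mult_cong, simp add: mult_ac,
        insert parity_a parity_b, (simp only: nonzero_factors)?, ((drule nonzero_even)+, simp only: parity_simps, argo?)?)
  finally show ?thesis .
qed

lemma etaR_etaL_exchange:
  "sc_mult HT (etaR \<beta>) (etaL \<gamma>) =
    (\<lambda>z. \<Sum>s\<in>UNIV. \<Sum>t\<in>UNIV. D_cross deg m mu Sinv \<beta> \<gamma> s t * sc_mult HT (etaL s) (etaR t) z)"
proof (intro ext, clarify)
  fix x y z w
  show "sc_mult HT (etaR \<beta>) (etaL \<gamma>) ((x, y), (z, w)) =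
      (\<Sum>s\<in>UNIV. \<Sum>t\<in>UNIV. D_cross deg m mu Sinv \<beta> \<gamma> s t * sc_mult HT (etaL s) (etaR t) ((x, y), (z, w)))"
    by (simp only: etaR_etaL_apply D_cross_etaL_etaR_comult D_cross_etaL_etaR_mult D_cross_etaL_etaR_antipode)
qed

abbreviation "eta_basis p \<equiv> sc_mult HT (etaL (fst p)) (etaR (snd p))"

lemma eta_basis_mult:
  "sc_mult HT (eta_basis i) (eta_basis j) = (\<lambda>z. \<Sum>p\<in>UNIV. D_const deg m mu Sinv i j p * eta_basis p z)"
proof -
  obtain \<alpha> \<beta> \<gamma> \<delta> where ij: "i = (\<alpha>, \<beta>)" "j = (\<gamma>, \<delta>)"
    by (cases i, cases j) blast
  have "sc_mult HT (eta_basis i) (eta_basis j) = sc_mult HT (etaL \<alpha>) (sc_mult HT (sc_mult HT (etaR \<beta>) (etaL \<gamma>)) (etaR \<delta>))"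
    by (simp only: ij T_mult_assoc fst_conv snd_conv)
  also have "\<dots> = (\<lambda>z. \<Sum>s\<in>UNIV. \<Sum>t\<in>UNIV. D_cross deg m mu Sinv \<beta> \<gamma> s t *
      sc_mult HT (sc_mult HT (etaL \<alpha>) (etaL s)) (sc_mult HT (etaR t) (etaR \<delta>)) z)"
    by (simp only: etaR_etaL_exchange sc_mult_sum2_left sc_mult_sum2_right T_mult_assoc)
  also have "\<dots> = (\<lambda>z. \<Sum>s\<in>UNIV. \<Sum>t\<in>UNIV. D_cross deg m mu Sinv \<beta> \<gamma> s t *
      (\<Sum>k\<in>UNIV. m k \<alpha> s * (\<Sum>l\<in>UNIV. sgn (deg t * deg \<delta>) * mu l t \<delta> * eta_basis (k, l) z)))"
    by (simp only: etaL_mult etaR_mult sc_mult_sum_left sc_mult_sum_right fst_conv snd_conv)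
  also have "\<dots> = (\<lambda>z. \<Sum>k\<in>UNIV. \<Sum>l\<in>UNIV. (\<Sum>s\<in>UNIV. \<Sum>t\<in>UNIV.
      D_cross deg m mu Sinv \<beta> \<gamma> s t * m k \<alpha> s * sgn (deg t * deg \<delta>) * mu l t \<delta>) * eta_basis (k, l) z)"
    by (intro ext, (simp only: sum_distrib_left sum_distrib_right)?, simp only: sum_product_UNIV,
        rule sum_UNIV_reindex_cong[of "\<lambda>(k, l, s, t). (s, t, k, l)" "\<lambda>(s, t, k, l). (k, l, s, t)"])
      (auto simp: mult_ac)
  also have "\<dots> = (\<lambda>z. \<Sum>p\<in>UNIV. D_const deg m mu Sinv i j p * eta_basis p z)"
    by (simp add: ij sum_UNIV_prod D_const_def)
  finally show ?thesis .
qed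

lemma etaL_unit: "(\<lambda>z. \<Sum>\<alpha>\<in>UNIV. u \<alpha> * etaL \<alpha> z) = T_unit u eps"
proof (intro ext, clarify)
  fix s t k l
  have "(\<Sum>\<alpha>\<in>UNIV. u \<alpha> * etaL \<alpha> ((s, t), (k, l))) =
      sgn (a * deg t + b * deg k) * eps s * eps l * (\<Sum>\<alpha>\<in>UNIV. u \<alpha> * mu \<alpha> t k)"
    unfolding eta_L_def by (simp add: kron_simps sum_distrib_left mult_ac)
  also have "\<dots> = sgn (a * deg t + b * deg k) * (eps s * u t * (u k * eps l))"
    by (simp add: comult_unit mult_ac)
  also have "\<dots> = T_unit u eps ((s, t), (k, l))"
    by (cases "u t = 0 \<or> u k = 0") (auto simp: T_unit_def sgn_if dest: u_even)
  finally show "(\<Sum>\<alpha>\<in>UNIV. u \<alpha> * etaL \<alpha> ((s, t), (k, l))) = T_unit u eps ((s, t), (k, l))" .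
qed

lemma etaR_counit: "(\<lambda>z. \<Sum>\<alpha>\<in>UNIV. eps \<alpha> * etaR \<alpha> z) = T_unit u eps"
proof (intro ext, clarify)
  fix s t k l
  have "(\<Sum>\<alpha>\<in>UNIV. eps \<alpha> * etaR \<alpha> ((s, t), (k, l))) =
      sgn (a' * deg s + b' * deg l) * u t * u k * (\<Sum>\<alpha>\<in>UNIV. m \<alpha> l s * eps \<alpha>)"
    unfolding eta_R_def by (simp add: kron_simps sum_distrib_left mult_ac)
  also have "\<dots> = sgn (a' * deg s + b' * deg l) * (eps s * u t * (u k * eps l))"
    by (simp only: counit_mult) (simp add: mult_ac)
  also have "\<dots> = T_unit u eps ((s, t), (k, l))"
    by (cases "eps s = 0 \<or> eps l = 0") (auto simp: T_unit_def sgn_if dest: eps_even)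
  finally show "(\<Sum>\<alpha>\<in>UNIV. eps \<alpha> * etaR \<alpha> ((s, t), (k, l))) = T_unit u eps ((s, t), (k, l))" .
qed

lemma HT_unit_idem: "sc_mult HT (T_unit u eps) (T_unit u eps) = T_unit u eps"
proof -
  have units: "T_unit u eps = pure_tensor (pure_tensor eps u) (pure_tensor u eps)"
    by (auto simp: T_unit_def pure_tensor_def)
  have "homogeneous pair_deg 0 (pure_tensor eps u)" "homogeneous pair_deg 0 (pure_tensor u eps)"
    by (auto simp: homogeneous_def pure_tensor_def pair_deg_def dest: eps_even u_even)
  moreover have "sc_mult HA (pure_tensor eps u) (pure_tensor eps u) = pure_tensor eps u"
    by (simp add: HA_const_twisted_tensor twisted_tensor_mult_unit_left[OF sc_unit_alg_mult HA_twist_unit_left]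
        sc_mult_unit_left[OF sc_unit_dual_mult])
  moreover have "sc_mult HAs (pure_tensor u eps) (pure_tensor u eps) = pure_tensor u eps"
    by (simp add: HAs_const_twisted_tensor twisted_tensor_mult_unit_left[OF sc_unit_dual_mult HAs_twist_unit_left]
        sc_mult_unit_left[OF sc_unit_alg_mult])
  ultimately show ?thesis
    unfolding units T_const_twisted_tensor by (simp add: graded_tensor_mult_pure sgn_def)
qed

lemma eta_alg_hom:
  "alg_hom (D_const deg m mu Sinv) (D_unit u eps) HT (T_unit u eps) (eta deg m u mu eps a a' b b')"
  unfolding alg_hom_def
proof (intro conjI allI)
  have eta_sum: "eta deg m u mu eps a a' b b' x = (\<lambda>z. \<Sum>p\<in>UNIV. x p * eta_basis p z)" for x
    by (simp add: eta_def)
  fix x y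
  show "eta deg m u mu eps a a' b b' (sc_mult (D_const deg m mu Sinv) x y) =
      sc_mult HT (eta deg m u mu eps a a' b b' x) (eta deg m u mu eps a a' b b' y)"
  proof
    fix z
    have "sc_mult HT (eta deg m u mu eps a a' b b' x) (eta deg m u mu eps a a' b b' y) z =
      (\<Sum>i\<in>UNIV. x i * (\<Sum>j\<in>UNIV. y j * (\<Sum>p\<in>UNIV. D_const deg m mu Sinv i j p * eta_basis p z)))"
      by (simp only: eta_sum sc_mult_sum_left sc_mult_sum_right eta_basis_mult)
    also have "\<dots> = (\<Sum>p\<in>UNIV. (\<Sum>i\<in>UNIV. \<Sum>j\<in>UNIV. x i * y j * D_const deg m mu Sinv i j p) * eta_basis p z)"
      by ((simp only: sum_distrib_left sum_distrib_right)?, simp only: sum_product_UNIV,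
          rule sum_UNIV_reindex_cong[of "\<lambda>(p, i, j). (i, j, p)" "\<lambda>(i, j, p). (p, i, j)"]) (auto simp: mult_ac)
    also have "\<dots> = eta deg m u mu eps a a' b b' (sc_mult (D_const deg m mu Sinv) x y) z"
      by (simp only: eta_sum sc_mult_def)
    finally show "eta deg m u mu eps a a' b b' (sc_mult (D_const deg m mu Sinv) x y) z =
        sc_mult HT (eta deg m u mu eps a a' b b' x) (eta deg m u mu eps a a' b b' y) z" by simp
  qed
  have "eta deg m u mu eps a a' b b' (D_unit u eps) =
      sc_mult HT (\<lambda>z. \<Sum>\<alpha>\<in>UNIV. u \<alpha> * etaL \<alpha> z) (\<lambda>z. \<Sum>\<beta>\<in>UNIV. eps \<beta> * etaR \<beta> z)"
    by (simp add: eta_sum sum_UNIV_prod D_unit_def sc_mult_sum_left sc_mult_sum_right sum_distrib_left mult.assoc)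
  then show "eta deg m u mu eps a a' b b' (D_unit u eps) = T_unit u eps"
    by (simp only: etaL_unit etaR_counit HT_unit_idem)
qed

end

theorem mainTheorem3:
  fixes deg :: "'i::finite \<Rightarrow> nat"
    and m mu :: "'i \<Rightarrow> 'i \<Rightarrow> 'i \<Rightarrow> complex"
    and u eps :: "'i \<Rightarrow> complex"
    and S Sinv :: "'i \<Rightarrow> 'i \<Rightarrow> complex"
    and a a' b b' :: nat
  assumes "graded_hopf deg m u mu eps S"
    and "inverse_coeffs S Sinv"
    and "(-1::int) ^ (a + a') = -1"
    and "(-1::int) ^ (b + b') = 1"
  shows "alg_hom (D_const deg m mu Sinv) (D_unit u eps)
                 (T_const deg m mu) (T_unit u eps)
                 (eta deg m u mu eps a a' b b')"
proof -
  from assms(3) have "odd (a + a')"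
    by (auto simp: minus_one_power_iff split: if_splits)
  moreover from assms(4) have "even (b + b')"
    by (auto simp: minus_one_power_iff split: if_splits)
  ultimately interpret drinfeld_heisenberg_map deg m mu u eps S Sinv a a' b b'
    using assms(1,2) by unfold_locales
  show ?thesis
    by (rule eta_alg_hom)
qed

end
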